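(* Let $Q$ be a finite $n$-nicely-graded bound quiver. Then there is a sequence $Q(0)=Q,Q(1),\dots,Q(t),\dots$ of nicely-graded bound quivers such that for every $t\ge0$: (1) $Q(t+1)=\widehat{Q(t)}$ is the multi-layer quiver of $Q(t)$; (2) $Q(t)$ is an $(n+t)$-nicely-graded quiver.
   Context: $k$ is a field. Bound quivers have relations that are linear combinations of paths of equal length $\ge2$ with common source and target; paths composed right to left; $s(p),t(p),l(p)$ are source, target, length; bound paths are nonzero in $\Lambda=kQ/(\rho)$. $Q$ is $m$-properly-graded if all maximal bound paths have length $m$; nicely-graded if there is $u:Q_0\to\mathbb Z$ with $u(j)=u(i)+1$ for each arrow $i\to j$ (equivalently every cyclic walk has zero grade); $m$-nicely-graded if both. Multi-layer quiver of a finite $m$-nicely-graded $Q$ (with a fixed basis $\mathcal M$ of $\Lambda_m$ of images of maximal bound paths, dual functionals $f^*\in D\Lambda$ vanishing off degree $m$, $D\Lambda$ a bimodule via $(a\varphi b)(x)=\varphi(bxa)$, and $\rho_{\mathcal M}$ the set of combinations $\sum_fc_fx_f\beta_fy_f$ of paths with $\sum_f c_fx_ff^*y_f=0$): vertices $(i,r)$, $i\in Q_0$, $0\le r\le m+1$; arrows $\alpha^{[r]}:(i,r)\to(j,r)$ for arrows $\alpha:i\to j$; $\gamma_i^{[r]}:(i,r)\to(i,r+1)$, $0\le r\le m$; $\beta_p:(t(p),0)\to(s(p),m+1)$, $p\in\mathcal M$. Relations: copies of $\rho$ on each floor; $\gamma_i^{[r+1]}\gamma_i^{[r]}$ ($0\le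 r\le m-1$); $\alpha^{[r+1]}\gamma_i^{[r]}-\gamma_j^{[r]}\alpha^{[r]}$ ($0\le r\le m$); $\sum_fc_fx_f^{[m+1]}\beta_fy_f^{[0]}$ for elements of $\rho_{\mathcal M}$. *)

theory Defs
  imports Main
begin

text \<open>A path is a pair (source vertex, list of arrows); the list is read as the
written composite, i.e. right to left: (s, [a_k, ..., a_1]) is a_k ... a_1 starting
at s. An element of the path algebra kQ is a
function from paths to k (finitely supported, supported on valid paths).\<close>

record ('V, 'A, 'k) bquiver =
  verts :: "'V set"
  arrs  :: "'A set"
  src   :: "'A \<Rightarrow> 'V"
  tgt   :: "'A \<Rightarrow> 'V"
  rels  :: "(('V \<times> 'A list) \<Rightarrow> 'k) set"

definition is_path :: "('V,'A,'k) bquiver \<Rightarrow> 'V \<times> 'A list \<Rightarrow> bool" where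
  "is_path Q p \<longleftrightarrow> fst p \<in> verts Q \<and> set (snd p) \<subseteq> arrs Q
     \<and> (\<forall>i. Suc i < length (snd p) \<longrightarrow> src Q (snd p ! i) = tgt Q (snd p ! Suc i))
     \<and> (snd p \<noteq> [] \<longrightarrow> src Q (last (snd p)) = fst p)"

definition ptgt :: "('V,'A,'k) bquiver \<Rightarrow> 'V \<times> 'A list \<Rightarrow> 'V" where
  "ptgt Q p = (if snd p = [] then fst p else tgt Q (hd (snd p)))"

definition plen :: "'V \<times> 'A list \<Rightarrow> nat" where
  "plen p = length (snd p)"

text \<open>pcomp q p = q p (first p, then q); meaningful when ptgt p = fst q.\<close>
definition pcomp :: "'V \<times> 'A list \<Rightarrow> 'V \<times> 'A list \<Rightarrow> 'V \<times> 'A list" where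
  "pcomp q p = (fst p, snd q @ snd p)"

definition ebasis :: "'P \<Rightarrow> 'P \<Rightarrow> 'k::field" where
  "ebasis p = (\<lambda>z. if z = p then 1 else 0)"

text \<open>x * a * y for paths x, y and an element a of kQ.\<close>
definition mul3 :: "('V,'A,'k::field) bquiver \<Rightarrow> 'V \<times> 'A list \<Rightarrow> ('V \<times> 'A list \<Rightarrow> 'k)
    \<Rightarrow> 'V \<times> 'A list \<Rightarrow> ('V \<times> 'A list \<Rightarrow> 'k)" where
  "mul3 Q x a y = (\<lambda>z. \<Sum>w \<in> {w. a w \<noteq> 0 \<and> fst w = ptgt Q y \<and> ptgt Q w = fst x
                                  \<and> pcomp x (pcomp w y) = z}. a w)"

inductive_set ideal_of :: "('V,'A,'k::field) bquiver \<Rightarrow> ('V \<times> 'A list \<Rightarrow> 'k) set"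
  for Q :: "('V,'A,'k) bquiver" where
  zero: "(\<lambda>_. 0) \<in> ideal_of Q"
| gen: "r \<in> rels Q \<Longrightarrow> is_path Q x \<Longrightarrow> is_path Q y \<Longrightarrow> mul3 Q x r y \<in> ideal_of Q"
| add: "a \<in> ideal_of Q \<Longrightarrow> b \<in> ideal_of Q \<Longrightarrow> (\<lambda>z. a z + b z) \<in> ideal_of Q"
| smult: "a \<in> ideal_of Q \<Longrightarrow> (\<lambda>z. c * a z) \<in> ideal_of Q"

definition bound_path :: "('V,'A,'k::field) bquiver \<Rightarrow> 'V \<times> 'A list \<Rightarrow> bool" where
  "bound_path Q p \<longleftrightarrow> is_path Q p \<and> ebasis p \<notin> ideal_of Q"

definition maximal_bound_path :: "('V,'A,'k::field) bquiver \<Rightarrow> 'V \<times> 'A list \<Rightarrow> bool" where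
  "maximal_bound_path Q p \<longleftrightarrow> bound_path Q p \<and>
     (\<forall>\<alpha>\<in>arrs Q.
        (src Q \<alpha> = ptgt Q p \<longrightarrow> \<not> bound_path Q (fst p, \<alpha> # snd p)) \<and>
        (tgt Q \<alpha> = fst p \<longrightarrow> \<not> bound_path Q (src Q \<alpha>, snd p @ [\<alpha>])))"

definition is_relation :: "('V,'A,'k::field) bquiver \<Rightarrow> ('V \<times> 'A list \<Rightarrow> 'k) \<Rightarrow> bool" where
  "is_relation Q r \<longleftrightarrow> finite {w. r w \<noteq> 0}
     \<and> (\<forall>w. r w \<noteq> 0 \<longrightarrow> is_path Q w \<and> plen w \<ge> 2)
     \<and> (\<forall>w w'. r w \<noteq> 0 \<longrightarrow> r w' \<noteq> 0 \<longrightarrow>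
           fst w = fst w' \<and> ptgt Q w = ptgt Q w' \<and> plen w = plen w')"

definition bound_quiver :: "('V,'A,'k::field) bquiver \<Rightarrow> bool" where
  "bound_quiver Q \<longleftrightarrow> (\<forall>\<alpha>\<in>arrs Q. src Q \<alpha> \<in> verts Q \<and> tgt Q \<alpha> \<in> verts Q)
     \<and> (\<forall>r\<in>rels Q. is_relation Q r)"

definition finite_bq :: "('V,'A,'k) bquiver \<Rightarrow> bool" where
  "finite_bq Q \<longleftrightarrow> finite (verts Q) \<and> finite (arrs Q)"

definition properly_graded :: "nat \<Rightarrow> ('V,'A,'k::field) bquiver \<Rightarrow> bool" where
  "properly_graded m Q \<longleftrightarrow> (\<forall>p. maximal_bound_path Q p \<longrightarrow> plen p = m)"

definition nicely_graded :: "('V,'A,'k::field) bquiver \<Rightarrow> bool" where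
  "nicely_graded Q \<longleftrightarrow> bound_quiver Q \<and>
     (\<exists>u :: 'V \<Rightarrow> int. \<forall>\<alpha>\<in>arrs Q. u (tgt Q \<alpha>) = u (src Q \<alpha>) + 1)"

definition m_nicely_graded :: "nat \<Rightarrow> ('V,'A,'k::field) bquiver \<Rightarrow> bool" where
  "m_nicely_graded m Q \<longleftrightarrow> nicely_graded Q \<and> properly_graded m Q"

definition lincomb :: "'P set \<Rightarrow> ('P \<Rightarrow> 'k::field) \<Rightarrow> 'P \<Rightarrow> 'k" where
  "lincomb M c = (\<lambda>z. \<Sum>p\<in>M. c p * ebasis p z)"

text \<open>M is a set of maximal bound paths whose images form a basis of Lambda_m
(the span of the images of the paths of length m).\<close>
definition is_mbasis :: "('V,'A,'k::field) bquiver \<Rightarrow> nat \<Rightarrow> ('V \<times> 'A list) set \<Rightarrow> bool" where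
  "is_mbasis Q m M \<longleftrightarrow> finite M \<and> (\<forall>p\<in>M. maximal_bound_path Q p \<and> plen p = m)
     \<and> (\<forall>c. lincomb M c \<in> ideal_of Q \<longrightarrow> (\<forall>p\<in>M. c p = 0))
     \<and> (\<forall>q. is_path Q q \<and> plen q = m \<longrightarrow>
           (\<exists>c. (\<lambda>z. ebasis q z - lincomb M c z) \<in> ideal_of Q))"

definition dualf :: "('V,'A,'k::field) bquiver \<Rightarrow> nat \<Rightarrow> ('V \<times> 'A list) set
     \<Rightarrow> 'V \<times> 'A list \<Rightarrow> 'V \<times> 'A list \<Rightarrow> 'k" where
  "dualf Q m M p w = (if is_path Q w \<and> plen w = m then
     (THE c. (\<forall>q. q \<notin> M \<longrightarrow> c q = 0) \<and>
             (\<lambda>z. ebasis w z - lincomb M c z) \<in> ideal_of Q) p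
   else 0)"

text \<open>(x p^* y)(z) = p^*(y z x), which is 0 if y z x is not composable.\<close>
definition dual_act :: "('V,'A,'k::field) bquiver \<Rightarrow> nat \<Rightarrow> ('V \<times> 'A list) set
     \<Rightarrow> 'V \<times> 'A list \<Rightarrow> 'V \<times> 'A list \<Rightarrow> 'V \<times> 'A list \<Rightarrow> 'V \<times> 'A list \<Rightarrow> 'k" where
  "dual_act Q m M x p y z = (if ptgt Q x = fst z \<and> ptgt Q z = fst y
      then dualf Q m M p (pcomp y (pcomp z x)) else 0)"

text \<open>A universe of vertices/arrows closed under the multi-layer construction.\<close>
datatype 'v vert = BaseV 'v | Lay "'v vert" nat
datatype ('v, 'a) arr = BaseA 'a | ACopy "('v, 'a) arr" nat | Gam "'v vert" nat
  | Beta "'v vert" "('v, 'a) arr list"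

type_synonym ('v, 'a, 'k) uquiver = "('v vert, ('v, 'a) arr, 'k) bquiver"

fun msrc :: "('v,'a,'k) uquiver \<Rightarrow> ('v,'a) arr \<Rightarrow> 'v vert" where
  "msrc Q (ACopy \<alpha> r) = Lay (src Q \<alpha>) r"
| "msrc Q (Gam i r) = Lay i r"
| "msrc Q (Beta s as) = Lay (ptgt Q (s, as)) 0"
| "msrc Q (BaseA a) = undefined"

fun mtgt :: "('v,'a,'k) uquiver \<Rightarrow> nat \<Rightarrow> ('v,'a) arr \<Rightarrow> 'v vert" where
  "mtgt Q m (ACopy \<alpha> r) = Lay (tgt Q \<alpha>) r"
| "mtgt Q m (Gam i r) = Lay i (Suc r)"
| "mtgt Q m (Beta s as) = Lay s (Suc m)"
| "mtgt Q m (BaseA a) = undefined"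

definition pcopy :: "nat \<Rightarrow> 'v vert \<times> ('v,'a) arr list \<Rightarrow> 'v vert \<times> ('v,'a) arr list" where
  "pcopy r p = (Lay (fst p) r, map (\<lambda>\<alpha>. ACopy \<alpha> r) (snd p))"

definition pushf :: "('P \<Rightarrow> 'R) \<Rightarrow> ('P \<Rightarrow> 'k::field) \<Rightarrow> 'R \<Rightarrow> 'k" where
  "pushf f a = (\<lambda>z. \<Sum>w\<in>{w. a w \<noteq> 0 \<and> f w = z}. a w)"

text \<open>The path x^[m+1] beta_p y^[0] of the multi-layer quiver.\<close>
definition bpath :: "nat \<Rightarrow> ('v vert \<times> ('v,'a) arr list) \<times> ('v vert \<times> ('v,'a) arr list)
     \<times> ('v vert \<times> ('v,'a) arr list) \<Rightarrow> 'v vert \<times> ('v,'a) arr list" where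
  "bpath m t = (case t of (x, p, y) \<Rightarrow>
     (Lay (fst y) 0, map (\<lambda>\<alpha>. ACopy \<alpha> (Suc m)) (snd x) @ [Beta (fst p) (snd p)]
                     @ map (\<lambda>\<alpha>. ACopy \<alpha> 0) (snd y)))"

definition ml_base :: "('v,'a,'k::field) uquiver \<Rightarrow> nat \<Rightarrow> ('v vert \<times> ('v,'a) arr list) set
     \<Rightarrow> ('v,'a,'k) uquiver" where
  "ml_base Q m M = \<lparr> verts = {Lay i r | i r. i \<in> verts Q \<and> r \<le> Suc m},
     arrs = {ACopy \<alpha> r | \<alpha> r. \<alpha> \<in> arrs Q \<and> r \<le> Suc m}
          \<union> {Gam i r | i r. i \<in> verts Q \<and> r \<le> m}
          \<union> {Beta (fst p) (snd p) | p. p \<in> M},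
     src = msrc Q, tgt = mtgt Q m, rels = {} \<rparr>"

text \<open>rho_M: the combinations sum_f c_f x_f^[m+1] beta_f y_f^[0] with
sum_f c_f x_f f^* y_f = 0 in D Lambda (tested on all paths z), which are relations.\<close>
definition rho_M :: "('v,'a,'k::field) uquiver \<Rightarrow> nat \<Rightarrow> ('v vert \<times> ('v,'a) arr list) set
     \<Rightarrow> ('v vert \<times> ('v,'a) arr list \<Rightarrow> 'k) set" where
  "rho_M Q m M = {a. is_relation (ml_base Q m M) a \<and>
     (\<exists>S c. finite S \<and>
        (\<forall>(x, p, y)\<in>S. is_path Q x \<and> p \<in> M \<and> is_path Q y \<and> fst x = fst p
                        \<and> ptgt Q y = ptgt Q p) \<and>
        a = (\<lambda>z. \<Sum>t\<in>S. c t * ebasis (bpath m t) z) \<and>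
        (\<forall>z. is_path Q z \<longrightarrow>
            (\<Sum>t\<in>S. c t * (case t of (x, p, y) \<Rightarrow> dual_act Q m M x p y z)) = 0))}"

definition multilayer :: "('v,'a,'k::field) uquiver \<Rightarrow> nat \<Rightarrow> ('v vert \<times> ('v,'a) arr list) set
     \<Rightarrow> ('v,'a,'k) uquiver" where
  "multilayer Q m M = ml_base Q m M \<lparr> rels :=
        {pushf (pcopy r) \<rho> | \<rho> r. \<rho> \<in> rels Q \<and> r \<le> Suc m}
      \<union> {ebasis (Lay i r, [Gam i (Suc r), Gam i r]) | i r. i \<in> verts Q \<and> r < m}
      \<union> {(\<lambda>z. ebasis (Lay (src Q \<alpha>) r, [ACopy \<alpha> (Suc r), Gam (src Q \<alpha>) r]) z
              - ebasis (Lay (src Q \<alpha>) r, [Gam (tgt Q \<alpha>) r, ACopy \<alpha> r]) z)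
          | \<alpha> r. \<alpha> \<in> arrs Q \<and> r \<le> m}
      \<union> rho_M Q m M \<rparr>"

definition is_multilayer_of :: "('v,'a,'k::field) uquiver \<Rightarrow> ('v,'a,'k) uquiver \<Rightarrow> bool" where
  "is_multilayer_of Q Q' \<longleftrightarrow> (\<exists>m M. finite_bq Q \<and> m_nicely_graded m Q \<and> is_mbasis Q m M
                                   \<and> Q' = multilayer Q m M)"

end

theory Submission
  imports Defs
begin

text \<open>The multi-layer quiver \<open>Q\<^sup>^\<close> of a finite \<open>m\<close>-nicely-graded bound quiver \<open>Q\<close> is again finite
  and nicely graded (the vertex \<open>(i, r)\<close> gets grade \<open>u(i) + r\<close>), and it is \<open>(m+1)\<close>-properly
  graded; iterating the construction, with a basis of \<open>\<Lambda>\<^sub>n\<^sub>+\<^sub>t\<close> chosen at each step, gives the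
  sequence of the theorem.

  For the proper grading, a bound path of \<open>Q\<^sup>^\<close> either avoids the arrows \<beta>, and then contains at
  most one arrow \<gamma> (the commutativity and \<open>\<gamma>\<gamma>\<close> relations kill the others) and is the copy of a
  bound path of \<open>Q\<close> up to that \<gamma>; or it is \<open>x\<^sup>[\<^sup>m\<^sup>+\<^sup>1\<^sup>] \<beta>\<^sub>p y\<^sup>[\<^sup>0\<^sup>]\<close> with \<open>x p\<^sup>* y \<noteq> 0\<close>, since otherwise it
  lies in \<open>\<rho>\<^sub>M\<close>, and then \<open>|x| + |y| \<le> m\<close>. So bound paths have length at most \<open>m + 1\<close>.
  Conversely a bound path of length at most \<open>m\<close> extends by a copied arrow, an arrow \<gamma> or an arrow
  \<beta>; that the extension is still bound is witnessed by a functional on paths that vanishes on the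
  ideal of \<open>Q\<^sup>^\<close>, built from a functional on \<open>\<Lambda>\<close> or from a dual basis functional \<open>p\<^sup>*\<close>.\<close>

section \<open>Finitely supported functions\<close>

text \<open>A function \<psi> on paths acts on \<open>kQ\<close> by linear extension; the elements of \<open>D\<Lambda>\<close> are the \<psi> whose
  pairing vanishes on the ideal \<open>(\<rho>)\<close>.\<close>

definition pairing :: "('p \<Rightarrow> 'k::field) \<Rightarrow> ('p \<Rightarrow> 'k) \<Rightarrow> 'k" where
  "pairing \<psi> a = (\<Sum>w\<in>{w. a w \<noteq> 0}. a w * \<psi> w)"

abbreviation fin_supp :: "('p \<Rightarrow> 'k::zero) \<Rightarrow> bool" where
  "fin_supp a \<equiv> finite {w. a w \<noteq> 0}"

lemma pushf_eq_sum:
  assumes "finite S" "{w. a w \<noteq> 0} \<subseteq> S"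
  shows "pushf f a z = (\<Sum>w\<in>S. if f w = z then a w else 0)"
proof -
  have "pushf f a z = (\<Sum>w\<in>{w. a w \<noteq> 0 \<and> f w = z}. a w)" by (simp add: pushf_def)
  also have "\<dots> = (\<Sum>w\<in>S \<inter> {w. f w = z}. a w)"
    by (rule sum.mono_neutral_left) (use assms in auto)
  also have "\<dots> = (\<Sum>w\<in>S. if f w = z then a w else 0)"
    using assms(1) by (simp add: sum.inter_restrict)
  finally show ?thesis .
qed

lemma pairing_eq_sum:
  assumes "finite S" "{w. a w \<noteq> 0} \<subseteq> S"
  shows "pairing \<psi> a = (\<Sum>w\<in>S. a w * \<psi> w)"
  unfolding pairing_def by (rule sum.mono_neutral_left) (use assms in auto)

lemma sum_fibres_mult:
  assumes "finite S"
  shows "(\<Sum>u\<in>f ` S. (\<Sum>w\<in>S. if f w = u then a w else 0) * h u)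
      = (\<Sum>w\<in>S. (a w :: 'k::field) * h (f w))"
proof -
  have "(\<Sum>u\<in>f ` S. (\<Sum>w\<in>S. if f w = u then a w else 0) * h u)
      = (\<Sum>u\<in>f ` S. \<Sum>w\<in>S. if f w = u then a w * h u else 0)"
    unfolding sum_distrib_right by (intro sum.cong) auto
  also have "\<dots> = (\<Sum>w\<in>S. \<Sum>u\<in>f ` S. if f w = u then a w * h u else 0)"
    by (rule sum.swap)
  also have "\<dots> = (\<Sum>w\<in>S. a w * h (f w))"
    using assms by (simp add: sum.delta')
  finally show ?thesis .
qed

lemma support_pushf: "{z. pushf f a z \<noteq> 0} \<subseteq> f ` {w. a w \<noteq> 0}"
proof
  fix z assume z: "z \<in> {z. pushf f a z \<noteq> 0}"
  have "{w. a w \<noteq> 0 \<and> f w = z} \<noteq> {}"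
  proof
    assume "{w. a w \<noteq> 0 \<and> f w = z} = {}"
    then have "pushf f a z = 0" unfolding pushf_def by (metis (no_types, lifting) sum.empty)
    then show False using z by simp
  qed
  then show "z \<in> f ` {w. a w \<noteq> 0}" by auto
qed

lemma fin_supp_pushf: "fin_supp a \<Longrightarrow> fin_supp (pushf f a)"
  by (rule finite_subset[OF support_pushf finite_imageI])

lemma pairing_pushf:
  assumes "fin_supp a"
  shows "pairing \<psi> (pushf f a) = pairing (\<lambda>w. \<psi> (f w)) a"
proof -
  let ?S = "{w. a w \<noteq> 0}"
  have "pairing \<psi> (pushf f a) = (\<Sum>u\<in>f ` ?S. pushf f a u * \<psi> u)"
    by (rule pairing_eq_sum) (use assms support_pushf[of f a] in auto)
  also have "\<dots> = (\<Sum>u\<in>f ` ?S. (\<Sum>w\<in>?S. if f w = u then a w else 0) * \<psi> u)"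
    by (simp add: pushf_eq_sum[OF assms order_refl])
  also have "\<dots> = (\<Sum>w\<in>?S. a w * \<psi> (f w))" by (rule sum_fibres_mult[OF assms])
  also have "\<dots> = pairing (\<lambda>w. \<psi> (f w)) a" by (simp add: pairing_def)
  finally show ?thesis .
qed

lemma pushf_comp:
  assumes "fin_supp a"
  shows "pushf g (pushf f a) = pushf (\<lambda>w. g (f w)) a"
proof
  fix z
  let ?S = "{w. a w \<noteq> 0}"
  have "pushf g (pushf f a) z = (\<Sum>u\<in>f ` ?S. if g u = z then pushf f a u else 0)"
    by (rule pushf_eq_sum) (use assms support_pushf[of f a] in auto)
  also have "\<dots> = (\<Sum>u\<in>f ` ?S. (\<Sum>w\<in>?S. if f w = u then a w else 0) * (if g u = z then 1 else 0))"
    by (intro sum.cong refl) (simp add: pushf_eq_sum[OF assms order_refl])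
  also have "\<dots> = (\<Sum>w\<in>?S. a w * (if g (f w) = z then 1 else 0))" by (rule sum_fibres_mult[OF assms])
  also have "\<dots> = (\<Sum>w\<in>?S. if g (f w) = z then a w else 0)" by (rule sum.cong) auto
  also have "\<dots> = pushf (\<lambda>w. g (f w)) a z" by (simp add: pushf_eq_sum[OF assms order_refl])
  finally show "pushf g (pushf f a) z = pushf (\<lambda>w. g (f w)) a z" .
qed

lemma pushf_add:
  assumes "fin_supp a" "fin_supp b"
  shows "pushf f (\<lambda>z. a z + b z) = (\<lambda>z. pushf f a z + pushf f b z)"
proof
  fix z
  let ?S = "{w. a w \<noteq> 0} \<union> {w. b w \<noteq> 0}"
  have fin: "finite ?S" using assms by auto
  have sa: "{w. a w \<noteq> 0} \<subseteq> ?S" and sb: "{w. b w \<noteq> 0} \<subseteq> ?S" by auto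
  have "pushf f (\<lambda>z. a z + b z) z = (\<Sum>w\<in>?S. if f w = z then a w + b w else 0)"
    by (rule pushf_eq_sum[OF fin]) auto
  also have "\<dots> = (\<Sum>w\<in>?S. if f w = z then a w else 0) + (\<Sum>w\<in>?S. if f w = z then b w else 0)"
    unfolding sum.distrib[symmetric] by (rule sum.cong) auto
  also have "\<dots> = pushf f a z + pushf f b z"
    using pushf_eq_sum[OF fin sa, of f z] pushf_eq_sum[OF fin sb, of f z] by simp
  finally show "pushf f (\<lambda>z. a z + b z) z = pushf f a z + pushf f b z" .
qed

lemma pushf_smult:
  assumes "fin_supp a"
  shows "pushf f (\<lambda>z. c * a z) = (\<lambda>z. c * pushf f a z)"
proof
  fix z
  let ?S = "{w. a w \<noteq> 0}"
  have "pushf f (\<lambda>z. c * a z) z = (\<Sum>w\<in>?S. if f w = z then c * a w else 0)"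
    by (rule pushf_eq_sum) (use assms in auto)
  also have "\<dots> = c * (\<Sum>w\<in>?S. if f w = z then a w else 0)"
    by (simp add: sum_distrib_left if_distrib cong: if_cong)
  also have "\<dots> = c * pushf f a z" by (simp add: pushf_eq_sum[OF assms order_refl])
  finally show "pushf f (\<lambda>z. c * a z) z = c * pushf f a z" .
qed

lemma pushf_diff:
  assumes "fin_supp a" "fin_supp b"
  shows "pushf f (\<lambda>z. a z - b z) = (\<lambda>z. pushf f a z - pushf f b z)"
proof -
  have "fin_supp (\<lambda>z. (-1) * b z)" using assms by simp
  have "(\<lambda>z. a z - b z) = (\<lambda>z. a z + (-1) * b z)" by simp
  then have "pushf f (\<lambda>z. a z - b z) = (\<lambda>z. pushf f a z + pushf f (\<lambda>z. (-1) * b z) z)"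
    using pushf_add[OF assms(1) \<open>fin_supp (\<lambda>z. (-1) * b z)\<close>] by simp
  also have "\<dots> = (\<lambda>z. pushf f a z - pushf f b z)" using pushf_smult[OF assms(2), of f "-1"] by simp
  finally show ?thesis .
qed

lemma pushf_zero: "pushf f (\<lambda>_. 0) = (\<lambda>_. (0::'k::field))"
  by (simp add: pushf_def)

lemma pushf_ebasis: "pushf f (ebasis u) = (ebasis (f u) :: _ \<Rightarrow> 'k::field)"
proof
  fix z
  have "pushf f (ebasis u) z = (\<Sum>w\<in>{u}. if f w = z then (ebasis u w :: 'k) else 0)"
    by (rule pushf_eq_sum) (auto simp: ebasis_def)
  also have "\<dots> = ebasis (f u) z" by (simp add: ebasis_def)
  finally show "pushf f (ebasis u) z = (ebasis (f u) z :: 'k)" .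
qed

lemma pushf_restrict:
  "(\<lambda>z. if C z then pushf f a z else 0) = pushf f (\<lambda>w. if C (f w) then a w else 0)"
  unfolding pushf_def by (rule ext) (auto intro: sum.cong)

lemma pairing_add: "fin_supp a \<Longrightarrow> fin_supp b \<Longrightarrow> pairing \<psi> (\<lambda>z. a z + b z) = pairing \<psi> a + pairing \<psi> b"
proof -
  assume a: "fin_supp a" and b: "fin_supp b"
  let ?S = "{w. a w \<noteq> 0} \<union> {w. b w \<noteq> 0}"
  have fin: "finite ?S" using a b by auto
  have sa: "{w. a w \<noteq> 0} \<subseteq> ?S" and sb: "{w. b w \<noteq> 0} \<subseteq> ?S" by auto
  have "pairing \<psi> (\<lambda>z. a z + b z) = (\<Sum>w\<in>?S. (a w + b w) * \<psi> w)"
    by (rule pairing_eq_sum[OF fin]) auto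
  also have "\<dots> = (\<Sum>w\<in>?S. a w * \<psi> w) + (\<Sum>w\<in>?S. b w * \<psi> w)"
    by (simp add: distrib_right sum.distrib)
  also have "\<dots> = pairing \<psi> a + pairing \<psi> b"
    using pairing_eq_sum[OF fin sa] pairing_eq_sum[OF fin sb] by simp
  finally show ?thesis .
qed

lemma pairing_smult: "fin_supp a \<Longrightarrow> pairing \<psi> (\<lambda>z. c * a z) = c * pairing \<psi> a"
proof -
  assume a: "fin_supp a"
  have "pairing \<psi> (\<lambda>z. c * a z) = (\<Sum>w\<in>{w. a w \<noteq> 0}. c * a w * \<psi> w)"
    by (rule pairing_eq_sum) (use a in auto)
  also have "\<dots> = c * pairing \<psi> a" by (simp add: pairing_def sum_distrib_left mult.assoc)
  finally show ?thesis .
qed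

lemma pairing_zero: "pairing \<psi> (\<lambda>_. 0) = 0" by (simp add: pairing_def)

lemma pairing_zero_fun: "pairing (\<lambda>_. 0) a = (0::'k::field)" by (simp add: pairing_def)

lemma pairing_ebasis: "pairing \<psi> (ebasis u) = (\<psi> u :: 'k::field)"
proof -
  have "pairing \<psi> (ebasis u) = (\<Sum>w\<in>{u}. ebasis u w * \<psi> w)"
    by (rule pairing_eq_sum) (auto simp: ebasis_def)
  then show ?thesis by (simp add: ebasis_def)
qed

lemma fin_supp_ebasis: "fin_supp (ebasis u :: _ \<Rightarrow> 'k::field)"
proof -
  have "{w. (ebasis u w :: 'k) \<noteq> 0} \<subseteq> {u}" by (auto simp: ebasis_def)
  then show ?thesis by (rule finite_subset) simp
qed

lemma pairing_diff_ebasis: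
  "u1 \<noteq> u2 \<Longrightarrow> pairing \<psi> (\<lambda>z. ebasis u1 z - ebasis u2 z) = (\<psi> u1 - \<psi> u2 :: 'k::field)"
proof -
  assume ne: "u1 \<noteq> u2"
  have "pairing \<psi> (\<lambda>z. ebasis u1 z - ebasis u2 z)
      = (\<Sum>w\<in>{u1, u2}. (ebasis u1 w - ebasis u2 w) * \<psi> w)"
    by (rule pairing_eq_sum) (auto simp: ebasis_def)
  then show ?thesis using ne by (simp add: ebasis_def)
qed

lemma pairing_restrict:
  "fin_supp a \<Longrightarrow> pairing \<psi> (\<lambda>w. if C w then a w else 0) = pairing (\<lambda>w. if C w then \<psi> w else 0) a"
proof -
  assume a: "fin_supp a"
  have "pairing \<psi> (\<lambda>w. if C w then a w else 0) = (\<Sum>w\<in>{w. a w \<noteq> 0}. (if C w then a w else 0) * \<psi> w)"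
    by (rule pairing_eq_sum) (use a in auto)
  also have "\<dots> = pairing (\<lambda>w. if C w then \<psi> w else 0) a"
    unfolding pairing_def by (rule sum.cong) auto
  finally show ?thesis .
qed

lemma pairing_sum_ebasis:
  assumes "finite S"
  shows "pairing \<psi> (\<lambda>z. \<Sum>t\<in>S. c t * ebasis (f t) z) = (\<Sum>t\<in>S. (c t :: 'k::field) * \<psi> (f t))"
proof -
  have eq: "(\<lambda>z. \<Sum>t\<in>S. c t * ebasis (f t) z) = (\<lambda>u. \<Sum>t\<in>S. if f t = u then c t else 0)"
    by (rule ext) (rule sum.cong, auto simp: ebasis_def)
  have sub: "{u. (\<Sum>t\<in>S. if f t = u then c t else 0) \<noteq> 0} \<subseteq> f ` S"
  proof
    fix u assume "u \<in> {u. (\<Sum>t\<in>S. if f t = u then c t else 0) \<noteq> 0}"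
    then have "(\<Sum>t\<in>S. if f t = u then c t else 0) \<noteq> 0" by simp
    then obtain t where "t \<in> S" "(if f t = u then c t else 0) \<noteq> 0"
      using sum.not_neutral_contains_not_neutral by blast
    then have "t \<in> S" "f t = u" by (auto split: if_splits)
    then show "u \<in> f ` S" by auto
  qed
  have "pairing \<psi> (\<lambda>u. \<Sum>t\<in>S. if f t = u then c t else 0)
      = (\<Sum>u\<in>f ` S. (\<Sum>t\<in>S. if f t = u then c t else 0) * \<psi> u)"
    by (rule pairing_eq_sum[OF finite_imageI[OF assms] sub])
  also have "\<dots> = (\<Sum>t\<in>S. c t * \<psi> (f t))" by (rule sum_fibres_mult[OF assms])
  finally show ?thesis by (simp only: eq)
qed

lemma all_nat_split: "(\<forall>i::nat. P i) \<longleftrightarrow> P 0 \<and> (\<forall>i. P (Suc i))"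
  by (metis not0_implies_Suc)

lemma is_path_Nil[simp]: "is_path Q (v, []) \<longleftrightarrow> v \<in> verts Q"
  by (simp add: is_path_def)

lemma ptgt_Nil[simp]: "ptgt Q (v, []) = v" by (simp add: ptgt_def)
lemma ptgt_Cons[simp]: "ptgt Q (v, a # L) = tgt Q a" by (simp add: ptgt_def)

lemma is_path_Cons: "is_path Q (v, a # L) \<longleftrightarrow> is_path Q (v, L) \<and> a \<in> arrs Q \<and> src Q a = ptgt Q (v, L)"
proof (cases L)
  case Nil then show ?thesis by (auto simp: is_path_def)
next
  case (Cons b L')
  have "(\<forall>i. Suc i < length (a # L) \<longrightarrow> src Q ((a # L) ! i) = tgt Q ((a # L) ! Suc i))
     \<longleftrightarrow> src Q a = tgt Q b \<and> (\<forall>i. Suc i < length L \<longrightarrow> src Q (L ! i) = tgt Q (L ! Suc i))"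
    using Cons by (subst all_nat_split) auto
  then show ?thesis using Cons by (auto simp: is_path_def)
qed

lemma ptgt_append: "ptgt Q (w, A @ B) = ptgt Q (ptgt Q (w, B), A)"
  by (cases A) auto

lemma ptgt_pcomp: "ptgt Q p = fst q \<Longrightarrow> ptgt Q (pcomp q p) = ptgt Q q"
  by (cases p, cases q) (simp add: ptgt_append pcomp_def)

lemma is_path_append: "is_path Q (w, B) \<Longrightarrow> is_path Q (ptgt Q (w, B), A) \<Longrightarrow> is_path Q (w, A @ B)"
proof (induction A)
  case Nil then show ?case by simp
next
  case (Cons a A)
  then show ?case by (simp add: is_path_Cons ptgt_append)
qed

lemma is_path_appendD1: "is_path Q (w, A @ B) \<Longrightarrow> is_path Q (w, B)"
  by (induction A) (auto simp: is_path_Cons)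

lemma ptgt_in_verts: "bound_quiver Q \<Longrightarrow> is_path Q p \<Longrightarrow> ptgt Q p \<in> verts Q"
proof -
  assume bq: "bound_quiver Q" and p: "is_path Q p"
  obtain v L where pv: "p = (v, L)" by (cases p)
  show ?thesis
  proof (cases L)
    case Nil then show ?thesis using p pv by simp
  next
    case (Cons a L') then show ?thesis using p pv bq by (auto simp: is_path_Cons bound_quiver_def)
  qed
qed

lemma is_path_appendD2: "bound_quiver Q \<Longrightarrow> is_path Q (w, A @ B) \<Longrightarrow> is_path Q (ptgt Q (w, B), A)"
proof (induction A)
  case Nil then show ?case using ptgt_in_verts[of Q "(w, B)"] is_path_appendD1[of Q w "[]" B] by simp
next
  case (Cons a A)
  then show ?case by (simp add: is_path_Cons ptgt_append)
qed

lemma is_path_pcomp: "is_path Q p \<Longrightarrow> is_path Q q \<Longrightarrow> ptgt Q p = fst q \<Longrightarrow> is_path Q (pcomp q p)"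
  by (cases p, cases q) (auto intro: is_path_append simp: pcomp_def)

lemma grade_ptgt:
  assumes "\<forall>\<alpha>\<in>arrs Q. u (tgt Q \<alpha>) = u (src Q \<alpha>) + (1::int)"
  shows "is_path Q (v, L) \<Longrightarrow> u (ptgt Q (v, L)) = u v + int (length L)"
proof (induction L)
  case Nil then show ?case by simp
next
  case (Cons a L)
  then show ?case using assms by (auto simp: is_path_Cons)
qed

section \<open>The ideal generated by the relations\<close>

definition fin_supp_rels :: "('V,'A,'k::field) bquiver \<Rightarrow> bool" where
  "fin_supp_rels Q \<longleftrightarrow> (\<forall>r\<in>rels Q. fin_supp r)"

lemma mul3_eq_pushf:
  "mul3 Q x a y = pushf (\<lambda>w. pcomp x (pcomp w y)) (\<lambda>w. if fst w = ptgt Q y \<and> ptgt Q w = fst x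
      then a w else 0)"
  unfolding mul3_def pushf_def
  by (rule ext, rule sum.cong) auto

lemma fin_supp_restrict: "fin_supp a \<Longrightarrow> fin_supp (\<lambda>w. if C w then a w else 0)"
  by (rule finite_subset[of _ "{w. a w \<noteq> 0}"]) auto

lemma fin_supp_mul3: "fin_supp a \<Longrightarrow> fin_supp (mul3 Q x a y)"
  unfolding mul3_eq_pushf by (intro fin_supp_pushf fin_supp_restrict)

lemma fin_supp_ideal:
  assumes "fin_supp_rels Q"
  shows "a \<in> ideal_of Q \<Longrightarrow> fin_supp a"
proof (induction a rule: ideal_of.induct)
  case zero then show ?case by simp
next
  case (gen r x y) then show ?case using assms by (intro fin_supp_mul3) (auto simp: fin_supp_rels_def)
next
  case (add a b)
  have "{z. a z + b z \<noteq> 0} \<subseteq> {z. a z \<noteq> 0} \<union> {z. b z \<noteq> 0}" by auto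
  then show ?case using add by (auto intro: finite_subset)
next
  case (smult a c)
  have "{z. c * a z \<noteq> 0} \<subseteq> {z. a z \<noteq> 0}" by auto
  then show ?case using smult by (auto intro: finite_subset)
qed

lemma pairing_mul3:
  "fin_supp r \<Longrightarrow> pairing \<psi> (mul3 Q x r y)
      = pairing (\<lambda>w. if fst w = ptgt Q y \<and> ptgt Q w = fst x then \<psi> (pcomp x (pcomp w y)) else 0) r"
  unfolding mul3_eq_pushf
  by (simp add: pairing_pushf fin_supp_restrict pairing_restrict)

lemma pairing_ideal_eq_0:
  assumes "fin_supp_rels Q"
    and "\<And>r x y. r \<in> rels Q \<Longrightarrow> is_path Q x \<Longrightarrow> is_path Q y \<Longrightarrow> pairing \<psi> (mul3 Q x r y) = 0"
  shows "a \<in> ideal_of Q \<Longrightarrow> pairing \<psi> a = 0"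
proof (induction a rule: ideal_of.induct)
  case zero then show ?case by (simp add: pairing_zero)
next
  case (gen r x y) then show ?case using assms(2) by blast
next
  case (add a b) then show ?case using fin_supp_ideal[OF assms(1)] by (simp add: pairing_add)
next
  case (smult a c) then show ?case using fin_supp_ideal[OF assms(1)] by (simp add: pairing_smult)
qed

lemma ideal_of_diff: "a \<in> ideal_of Q \<Longrightarrow> b \<in> ideal_of Q \<Longrightarrow> (\<lambda>z. a z - b z) \<in> ideal_of Q"
proof -
  assume a: "a \<in> ideal_of Q" and b: "b \<in> ideal_of Q"
  have "(\<lambda>z. (-1) * b z) \<in> ideal_of Q" using b by (rule ideal_of.smult)
  from ideal_of.add[OF a this] show ?thesis by simp
qed

lemma ideal_of_sum:
  "finite S \<Longrightarrow> (\<And>i. i \<in> S \<Longrightarrow> g i \<in> ideal_of Q) \<Longrightarrow> (\<lambda>z. \<Sum>i\<in>S. c i * g i z) \<in> ideal_of Q"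
proof (induction S rule: finite_induct)
  case empty then show ?case by (simp add: ideal_of.zero)
next
  case (insert i S)
  have "(\<lambda>z. c i * g i z) \<in> ideal_of Q" using insert by (intro ideal_of.smult) auto
  from ideal_of.add[OF this insert.IH] insert show ?case by simp
qed

lemma restrict_ebasis:
  "(\<lambda>w. if C w then ebasis u w else 0) = (if C u then ebasis u else (\<lambda>_. (0::'k::field)))"
  by (rule ext) (auto simp: ebasis_def)

lemma mul3_ebasis:
  "mul3 Q x (ebasis u) y = (if fst u = ptgt Q y \<and> ptgt Q u = fst x
      then ebasis (pcomp x (pcomp u y)) else (\<lambda>_. (0::'k::field)))"
  unfolding mul3_eq_pushf restrict_ebasis
  by (simp add: pushf_ebasis pushf_zero)

lemma restrict_diff:
  "(\<lambda>w. if C w then a w - b w else 0) = (\<lambda>w. (if C w then a w else 0) - (if C w then b w else (0::'k::field)))"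
  by auto

lemma restrict_add:
  "(\<lambda>w. if C w then a w + b w else 0) = (\<lambda>w. (if C w then a w else 0) + (if C w then b w else (0::'k::field)))"
  by auto

lemma restrict_smult:
  "(\<lambda>w. if C w then c * a w else 0) = (\<lambda>w. c * (if C w then a w else (0::'k::field)))"
  by auto

lemma mul3_diff:
  "fin_supp a \<Longrightarrow> fin_supp b \<Longrightarrow> mul3 Q x (\<lambda>z. a z - b z) y = (\<lambda>z. mul3 Q x a y z - mul3 Q x b y z)"
  unfolding mul3_eq_pushf restrict_diff
  by (simp add: pushf_diff fin_supp_restrict)

lemma mul3_add:
  "fin_supp a \<Longrightarrow> fin_supp b \<Longrightarrow> mul3 Q x (\<lambda>z. a z + b z) y = (\<lambda>z. mul3 Q x a y z + mul3 Q x b y z)"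
  unfolding mul3_eq_pushf restrict_add
  by (simp add: pushf_add fin_supp_restrict)

lemma mul3_smult: "fin_supp a \<Longrightarrow> mul3 Q x (\<lambda>z. c * a z) y = (\<lambda>z. c * mul3 Q x a y z)"
  unfolding mul3_eq_pushf restrict_smult
  by (simp add: pushf_smult fin_supp_restrict)

lemma mul3_zero: "mul3 Q x (\<lambda>_. 0) y = (\<lambda>_. (0::'k::field))"
  by (simp add: mul3_def)

lemma support_mul3:
  "mul3 Q x a y z \<noteq> 0 \<Longrightarrow> \<exists>w. a w \<noteq> 0 \<and> fst w = ptgt Q y \<and> ptgt Q w = fst x \<and> z = pcomp x (pcomp w y)"
proof (rule ccontr)
  assume ne: "mul3 Q x a y z \<noteq> 0" and "\<not> (\<exists>w. a w \<noteq> 0 \<and> fst w = ptgt Q y \<and> ptgt Q w = fst x \<and> z = pcomp x (pcomp w y))"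
  then have e: "{w. a w \<noteq> 0 \<and> fst w = ptgt Q y \<and> ptgt Q w = fst x \<and> pcomp x (pcomp w y) = z} = {}"
    by auto
  have "mul3 Q x a y z = 0" unfolding mul3_def e by simp
  then show False using ne by simp
qed

lemma mul3_mul3:
  assumes "fin_supp r"
  shows "mul3 Q X (mul3 Q x r y) Y = (if ptgt Q Y = fst y \<and> ptgt Q x = fst X
      then mul3 Q (pcomp X x) r (pcomp y Y) else (\<lambda>_. 0))"
proof -
  define r1 where "r1 = (\<lambda>w. if fst w = ptgt Q y \<and> ptgt Q w = fst x then r w else 0)"
  define f1 where "f1 = (\<lambda>w. pcomp x (pcomp w y))"
  have fr1: "fin_supp r1" unfolding r1_def by (rule fin_supp_restrict[OF assms])
  define C where "C = (ptgt Q Y = fst y \<and> ptgt Q x = fst X)"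
  have m1: "mul3 Q x r y = pushf f1 r1" unfolding r1_def f1_def by (rule mul3_eq_pushf)
  have "mul3 Q X (mul3 Q x r y) Y = pushf (\<lambda>w. pcomp X (pcomp w Y))
      (\<lambda>z. if fst z = ptgt Q Y \<and> ptgt Q z = fst X then pushf f1 r1 z else 0)"
    unfolding m1 by (rule mul3_eq_pushf)
  also have "\<dots> = pushf (\<lambda>w. pcomp X (pcomp w Y)) (pushf f1 (\<lambda>w. if fst (f1 w) = ptgt Q Y \<and> ptgt Q (f1 w) = fst X then r1 w else 0))"
    by (subst pushf_restrict) simp
  also have "(\<lambda>w. if fst (f1 w) = ptgt Q Y \<and> ptgt Q (f1 w) = fst X then r1 w else 0)
      = (\<lambda>w. if C then r1 w else 0)"
  proof
    fix w
    show "(if fst (f1 w) = ptgt Q Y \<and> ptgt Q (f1 w) = fst X then r1 w else 0)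
        = (if C then r1 w else 0)"
    proof (cases "r1 w = 0")
      case True then show ?thesis by simp
    next
      case False
      then have c1: "fst w = ptgt Q y" "ptgt Q w = fst x"
        unfolding r1_def by (auto split: if_splits)
      have "ptgt Q (pcomp w y) = ptgt Q w" using c1 by (intro ptgt_pcomp) simp
      then have "ptgt Q (f1 w) = ptgt Q x" unfolding f1_def using c1 by (intro ptgt_pcomp) simp
      moreover have "fst (f1 w) = fst y" unfolding f1_def by (simp add: pcomp_def)
      ultimately show ?thesis unfolding C_def by auto
    qed
  qed
  finally have eq: "mul3 Q X (mul3 Q x r y) Y
      = pushf (\<lambda>w. pcomp X (pcomp w Y)) (pushf f1 (\<lambda>w. if C then r1 w else 0))" .
  show ?thesis
  proof (cases C)
    case False
    have z: "mul3 Q X (mul3 Q x r y) Y = (\<lambda>_. 0)" using eq False by (simp add: pushf_zero)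
    have nC: "\<not> (ptgt Q Y = fst y \<and> ptgt Q x = fst X)" using False unfolding C_def .
    show ?thesis unfolding if_not_P[OF nC] by (rule z)
  next
    case True
    have "mul3 Q X (mul3 Q x r y) Y = pushf (\<lambda>w. pcomp X (pcomp (f1 w) Y)) r1"
      using eq True by (simp add: pushf_comp fr1)
    also have "\<dots> = mul3 Q (pcomp X x) r (pcomp y Y)"
    proof -
      have "ptgt Q (pcomp y Y) = ptgt Q y" using True unfolding C_def by (intro ptgt_pcomp) simp
      then have "r1 = (\<lambda>w. if fst w = ptgt Q (pcomp y Y) \<and> ptgt Q w = fst (pcomp X x)
          then r w else 0)"
        unfolding r1_def by (simp add: pcomp_def)
      moreover have "(\<lambda>w. pcomp X (pcomp (f1 w) Y)) = (\<lambda>w. pcomp (pcomp X x) (pcomp w (pcomp y Y)))"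
        unfolding f1_def by (simp add: pcomp_def)
      ultimately show ?thesis by (simp add: mul3_eq_pushf)
    qed
    finally have z: "mul3 Q X (mul3 Q x r y) Y = mul3 Q (pcomp X x) r (pcomp y Y)" .
    have C': "ptgt Q Y = fst y \<and> ptgt Q x = fst X" using True unfolding C_def .
    show ?thesis unfolding if_P[OF C'] by (rule z)
  qed
qed

lemma mul3_ideal_of:
  assumes "fin_supp_rels Q"
  shows "a \<in> ideal_of Q \<Longrightarrow> is_path Q X \<Longrightarrow> is_path Q Y \<Longrightarrow> mul3 Q X a Y \<in> ideal_of Q"
proof (induction a rule: ideal_of.induct)
  case zero then show ?case by (simp add: mul3_zero ideal_of.zero)
next
  case (gen r x y)
  have "fin_supp r" using gen assms by (auto simp: fin_supp_rels_def)
  show ?case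
  proof (cases "ptgt Q Y = fst y \<and> ptgt Q x = fst X")
    case True
    then have i: "mul3 Q (pcomp X x) r (pcomp y Y) \<in> ideal_of Q"
      using gen by (intro ideal_of.gen is_path_pcomp) auto
    have "mul3 Q X (mul3 Q x r y) Y = mul3 Q (pcomp X x) r (pcomp y Y)"
      unfolding mul3_mul3[OF \<open>fin_supp r\<close>, of Q X x y Y] if_P[OF True] ..
    then show ?thesis using i by simp
  next
    case False
    show ?thesis unfolding mul3_mul3[OF \<open>fin_supp r\<close>, of Q X x y Y] if_not_P[OF False] by (rule ideal_of.zero)
  qed
next
  case (add a b)
  then show ?case using fin_supp_ideal[OF assms] by (simp add: mul3_add ideal_of.add)
next
  case (smult a c)
  then show ?case using fin_supp_ideal[OF assms] by (simp add: mul3_smult ideal_of.smult)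
qed

lemma ideal_of_restrict_ends:
  assumes "fin_supp_rels Q"
  shows "a \<in> ideal_of Q \<Longrightarrow> (\<lambda>z. if fst z = s \<and> ptgt Q z = t then a z else 0) \<in> ideal_of Q"
proof (induction a rule: ideal_of.induct)
  case zero then show ?case by (simp add: ideal_of.zero)
next
  case (gen r x y)
  have ends: "fst z = fst y \<and> ptgt Q z = ptgt Q x" if nz: "mul3 Q x r y z \<noteq> 0" for z
  proof -
    obtain w where w: "r w \<noteq> 0" "fst w = ptgt Q y" "ptgt Q w = fst x" "z = pcomp x (pcomp w y)"
      using support_mul3[of Q x r y z] nz by blast
    have "ptgt Q (pcomp w y) = ptgt Q w" using w by (intro ptgt_pcomp) simp
    then have "ptgt Q (pcomp x (pcomp w y)) = ptgt Q x" using w by (intro ptgt_pcomp) simp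
    then have "ptgt Q z = ptgt Q x" using w(4) by simp
    then show ?thesis using w by (simp add: pcomp_def)
  qed
  show ?case
  proof (cases "fst y = s \<and> ptgt Q x = t")
    case True
    have "(\<lambda>z. if fst z = s \<and> ptgt Q z = t then mul3 Q x r y z else 0) = mul3 Q x r y"
    proof
      fix z show "(if fst z = s \<and> ptgt Q z = t then mul3 Q x r y z else 0) = mul3 Q x r y z"
        using ends[of z] True by (cases "mul3 Q x r y z = 0") auto
    qed
    then show ?thesis using gen by (simp add: ideal_of.gen)
  next
    case False
    have "(\<lambda>z. if fst z = s \<and> ptgt Q z = t then mul3 Q x r y z else 0) = (\<lambda>_. 0)"
    proof
      fix z show "(if fst z = s \<and> ptgt Q z = t then mul3 Q x r y z else 0) = 0"
        using ends[of z] False by (cases "mul3 Q x r y z = 0") auto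
    qed
    then show ?thesis by (simp add: ideal_of.zero)
  qed
next
  case (add a b)
  from ideal_of.add[OF add.IH] show ?case by (simp only: restrict_add)
next
  case (smult a c)
  from ideal_of.smult[OF smult.IH] show ?case by (simp only: restrict_smult)
qed

lemma ideal_of_support_paths:
  assumes "\<forall>r\<in>rels Q. \<forall>w. r w \<noteq> 0 \<longrightarrow> is_path Q w"
  shows "a \<in> ideal_of Q \<Longrightarrow> a z \<noteq> 0 \<Longrightarrow> is_path Q z"
proof (induction a arbitrary: z rule: ideal_of.induct)
  case zero then show ?case by simp
next
  case (gen r x y)
  obtain w where w: "r w \<noteq> 0" "fst w = ptgt Q y" "ptgt Q w = fst x" "z = pcomp x (pcomp w y)"
    using support_mul3[OF gen(4)] by blast
  have pw: "is_path Q w" using assms gen w by blast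
  have "is_path Q (pcomp w y)" using pw gen w by (intro is_path_pcomp) auto
  moreover have "ptgt Q (pcomp w y) = fst x" using w by (subst ptgt_pcomp) auto
  ultimately have "is_path Q (pcomp x (pcomp w y))" using gen by (simp add: is_path_pcomp)
  then show ?case using w by simp
next
  case (add a b) then show ?case by (cases "a z = 0") auto
next
  case (smult a c) then show ?case by (cases "a z = 0") auto
qed

definition path_equiv :: "('V,'A,'k::field) bquiver \<Rightarrow> 'V \<times> 'A list \<Rightarrow> 'V \<times> 'A list \<Rightarrow> bool" where
  "path_equiv Q P P' \<longleftrightarrow> (\<lambda>z. ebasis P z - ebasis P' z :: 'k) \<in> ideal_of Q"

lemma path_equiv_refl: "path_equiv Q P P" unfolding path_equiv_def by (simp add: ideal_of.zero)

lemma path_equiv_trans [trans]: "path_equiv Q P P' \<Longrightarrow> path_equiv Q P' P'' \<Longrightarrow> path_equiv Q P P''"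
  unfolding path_equiv_def by (drule (1) ideal_of.add) simp

lemma path_equiv_ideal: "path_equiv Q P P' \<Longrightarrow> ebasis P' \<in> ideal_of Q \<Longrightarrow> ebasis P \<in> ideal_of Q"
  unfolding path_equiv_def by (drule (1) ideal_of.add) simp

lemma is_path_arrow: "a \<in> arrs Q \<Longrightarrow> src Q a \<in> verts Q \<Longrightarrow> is_path Q (src Q a, [a])"
  by (simp add: is_path_Cons)

lemma path_equiv_prepend:
  assumes "fin_supp_rels Q" "path_equiv Q P P'" "fst P = fst P'" "ptgt Q P = src Q a" "ptgt Q P' = src Q a"
    "a \<in> arrs Q" "src Q a \<in> verts Q" "fst P \<in> verts Q"
  shows "path_equiv Q (fst P, a # snd P) (fst P', a # snd P')"
proof -
  let ?X = "(src Q a, [a])" and ?Y = "(fst P, [])"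
  have "mul3 Q ?X (\<lambda>z. ebasis P z - ebasis P' z) ?Y \<in> ideal_of Q"
    using assms by (intro mul3_ideal_of is_path_arrow) (auto simp: path_equiv_def)
  moreover have "mul3 Q ?X (\<lambda>z. ebasis P z - ebasis P' z) ?Y
      = (\<lambda>z. ebasis (fst P, a # snd P) z - ebasis (fst P', a # snd P') z)"
    using assms by (simp add: mul3_diff fin_supp_ebasis mul3_ebasis pcomp_def)
  ultimately show ?thesis unfolding path_equiv_def by simp
qed

lemma ideal_prepend:
  assumes "fin_supp_rels Q" "ebasis P \<in> ideal_of Q" "ptgt Q P = src Q a"
    "a \<in> arrs Q" "src Q a \<in> verts Q" "fst P \<in> verts Q"
  shows "ebasis (fst P, a # snd P) \<in> ideal_of Q"
proof -
  let ?X = "(src Q a, [a])" and ?Y = "(fst P, [])"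
  have "mul3 Q ?X (ebasis P) ?Y \<in> ideal_of Q"
    using assms by (intro mul3_ideal_of is_path_arrow) auto
  moreover have "mul3 Q ?X (ebasis P) ?Y = ebasis (fst P, a # snd P)"
    using assms by (simp add: mul3_ebasis pcomp_def)
  ultimately show ?thesis by simp
qed

lemma bound_pathI_functional:
  assumes "is_path Q P" "\<And>a. a \<in> ideal_of Q \<Longrightarrow> pairing \<psi> a = 0" "\<psi> P \<noteq> 0"
  shows "bound_path Q P"
  using assms pairing_ebasis unfolding bound_path_def by metis

lemma ebasis_rel_ideal:
  assumes "bound_quiver Q" "is_path Q P" "ebasis P \<in> rels Q"
  shows "ebasis P \<in> ideal_of Q"
proof -
  have "is_path Q (ptgt Q P, [])" "is_path Q (fst P, [])"
    using assms ptgt_in_verts[of Q P] by (simp_all add: is_path_def)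
  then have "mul3 Q (ptgt Q P, []) (ebasis P) (fst P, []) \<in> ideal_of Q"
    using assms(3) by (intro ideal_of.gen)
  then show ?thesis by (simp add: mul3_ebasis pcomp_def)
qed

abbreviation lin_indep_mod :: "('V,'A,'k::field) bquiver \<Rightarrow> ('V \<times> 'A list) set \<Rightarrow> bool" where
  "lin_indep_mod Q M \<equiv> \<forall>c. lincomb M c \<in> ideal_of Q \<longrightarrow> (\<forall>p\<in>M. c p = 0)"

abbreviation in_span_mod :: "('V,'A,'k::field) bquiver \<Rightarrow> ('V \<times> 'A list) set \<Rightarrow> 'V \<times> 'A list \<Rightarrow> bool" where
  "in_span_mod Q M q \<equiv> \<exists>c. (\<lambda>z. ebasis q z - lincomb M c z) \<in> ideal_of Q"

lemma lincomb_indicator: "finite M \<Longrightarrow> p \<in> M \<Longrightarrow> lincomb M (\<lambda>q. if q = p then 1 else 0) = ebasis p"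
  unfolding lincomb_def
proof (rule ext)
  fix z assume "finite M" "p \<in> M"
  have "(\<Sum>q\<in>M. (if q = p then 1 else 0) * ebasis q z) = (\<Sum>q\<in>M. if q = p then ebasis p z else 0)"
    by (rule sum.cong) auto
  also have "\<dots> = ebasis p z" using \<open>finite M\<close> \<open>p \<in> M\<close> by simp
  finally show "(\<Sum>q\<in>M. (if q = p then 1 else 0) * ebasis q z) = ebasis p z" .
qed

lemma lincomb_diff_scaled: "lincomb M (\<lambda>q. c1 q - k * c2 q) z = lincomb M c1 z - k * lincomb M c2 z"
  unfolding lincomb_def by (simp add: algebra_simps sum_subtractf sum_distrib_left)

lemma lincomb_zero_on: "(\<forall>p\<in>M. c p = 0) \<Longrightarrow> lincomb M c = (\<lambda>_. 0)"
  unfolding lincomb_def by (rule ext) simp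

lemma ideal_coordinates_eq_0:
  assumes indep: "lin_indep_mod Q M"
    and finite_M: "finite M" and b: "b \<in> ideal_of Q" and finZ: "finite Z" and sub: "{w. b w \<noteq> 0} \<subseteq> Z"
    and cf: "\<And>z. z \<in> Z \<Longrightarrow> (\<lambda>u. ebasis z u - lincomb M (cf z) u) \<in> ideal_of Q"
  shows "\<forall>p\<in>M. (\<Sum>z\<in>Z. b z * cf z p) = 0"
proof -
  define d where "d = (\<lambda>p. \<Sum>z\<in>Z. b z * cf z p)"
  have h1: "(\<lambda>u. \<Sum>z\<in>Z. b z * (ebasis z u - lincomb M (cf z) u)) \<in> ideal_of Q"
    by (rule ideal_of_sum[OF finZ cf])
  have h2: "(\<lambda>u. \<Sum>z\<in>Z. b z * (ebasis z u - lincomb M (cf z) u)) = (\<lambda>u. b u - lincomb M d u)"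
  proof
    fix u
    have e1: "(\<Sum>z\<in>Z. b z * ebasis z u) = b u"
    proof -
      have "(\<Sum>z\<in>Z. b z * ebasis z u) = (\<Sum>z\<in>Z. if u = z then b z else 0)"
        by (rule sum.cong) (auto simp: ebasis_def)
      also have "\<dots> = (if u \<in> Z then b u else 0)" using finZ by simp
      also have "\<dots> = b u" using sub by auto
      finally show ?thesis .
    qed
    have e2: "(\<Sum>z\<in>Z. b z * lincomb M (cf z) u) = lincomb M d u"
      unfolding lincomb_def d_def
      by (simp add: sum_distrib_left sum_distrib_right mult.assoc) (rule sum.swap)
    show "(\<Sum>z\<in>Z. b z * (ebasis z u - lincomb M (cf z) u)) = b u - lincomb M d u"
      using e1 e2 by (simp add: right_diff_distrib sum_subtractf)
  qed
  have "(\<lambda>u. b u - (b u - lincomb M d u)) \<in> ideal_of Q"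
    using ideal_of_diff[OF b h1[unfolded h2]] .
  then have "lincomb M d \<in> ideal_of Q" by simp
  then show ?thesis using indep unfolding d_def by blast
qed

text \<open>A spanning subset of minimal cardinality is independent.\<close>

lemma ex_basis_mod_ideal:
  assumes "finite P"
  obtains M where "M \<subseteq> P" "lin_indep_mod Q M" "\<forall>q\<in>P. in_span_mod Q M q"
proof -
  define F where "F = (\<lambda>M. M \<subseteq> P \<and> (\<forall>q\<in>P. in_span_mod Q M q))"
  have "F P"
  proof -
    have "(\<lambda>z. ebasis q z - lincomb P (\<lambda>q'. if q' = q then 1 else 0) z) \<in> ideal_of Q" if "q \<in> P" for q
      unfolding lincomb_indicator[OF assms that] by (simp add: ideal_of.zero)
    then show ?thesis unfolding F_def by blast
  qed
  then obtain M where FM: "F M" and minM: "\<And>M'. F M' \<Longrightarrow> card M \<le> card M'"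
    using ex_has_least_nat[of F P card] by blast
  have finite_M: "finite M" using FM assms unfolding F_def by (auto intro: finite_subset)
  have indep: "\<forall>p\<in>M. c p = 0" if lc: "lincomb M c \<in> ideal_of Q" for c
  proof (rule ccontr)
    assume "\<not> (\<forall>p\<in>M. c p = 0)"
    then obtain p where pM: "p \<in> M" and cp: "c p \<noteq> 0" by blast
    have "F (M - {p})"
    proof -
      have "in_span_mod Q (M - {p}) q" if qP: "q \<in> P" for q
      proof -
        obtain d where d: "(\<lambda>z. ebasis q z - lincomb M d z) \<in> ideal_of Q"
          using FM qP unfolding F_def by blast
        define k where "k = d p / c p"
        define d' where "d' = (\<lambda>p'. d p' - k * c p')"
        have d'p: "d' p = 0" unfolding d'_def k_def using cp by simp
        have "lincomb (M - {p}) d' = lincomb M d'"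
        proof
          fix z
          show "lincomb (M - {p}) d' z = lincomb M d' z"
            unfolding lincomb_def using finite_M pM d'p by (simp add: sum.remove)
        qed
        moreover have "lincomb M d' z = lincomb M d z - k * lincomb M c z" for z
          unfolding d'_def by (rule lincomb_diff_scaled)
        ultimately have eq: "(\<lambda>z. ebasis q z - lincomb (M - {p}) d' z)
            = (\<lambda>z. (ebasis q z - lincomb M d z) + k * lincomb M c z)"
          by (auto simp: algebra_simps)
        have "(\<lambda>z. (ebasis q z - lincomb M d z) + k * lincomb M c z) \<in> ideal_of Q"
          by (rule ideal_of.add[OF d ideal_of.smult[OF lc]])
        then show ?thesis using eq by metis
      qed
      then show ?thesis using FM unfolding F_def by auto
    qed
    then have "card M \<le> card (M - {p})" by (rule minM)
    moreover have "card (M - {p}) < card M" by (rule card_Diff1_less[OF finite_M pM])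
    ultimately show False by simp
  qed
  show thesis using FM indep unfolding F_def by (intro that[of M]) blast+
qed

lemma bound_quiver_fin_supp_rels: "bound_quiver Q \<Longrightarrow> fin_supp_rels Q"
  by (auto simp: bound_quiver_def is_relation_def fin_supp_rels_def)

lemma bound_quiver_rels_paths: "bound_quiver Q \<Longrightarrow> \<forall>r\<in>rels Q. \<forall>w. r w \<noteq> 0 \<longrightarrow> is_path Q w"
  by (auto simp: bound_quiver_def is_relation_def)

lemma path_length_bounded:
  assumes "finite_bq Q" "nicely_graded Q"
  shows "\<exists>N. \<forall>p. is_path Q p \<longrightarrow> plen p \<le> N"
proof -
  obtain u :: "_ \<Rightarrow> int" where u: "\<forall>\<alpha>\<in>arrs Q. u (tgt Q \<alpha>) = u (src Q \<alpha>) + 1"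
    using assms(2) unfolding nicely_graded_def by blast
  have bq: "bound_quiver Q" using assms(2) unfolding nicely_graded_def by blast
  have fin: "finite (u ` verts Q)" using assms(1) unfolding finite_bq_def by blast
  define N where "N = nat (Max (u ` verts Q) - Min (u ` verts Q))"
  have "plen p \<le> N" if p: "is_path Q p" for p
  proof -
    obtain v L where pv: "p = (v, L)" by (cases p)
    have g: "u (ptgt Q (v, L)) = u v + int (length L)" using grade_ptgt[OF u] p pv by blast
    have v: "v \<in> verts Q" using p pv by (simp add: is_path_def)
    have t: "ptgt Q (v, L) \<in> verts Q" using ptgt_in_verts[OF bq] p pv by blast
    have "u (ptgt Q (v, L)) \<le> Max (u ` verts Q)" using fin t by simp
    moreover have "Min (u ` verts Q) \<le> u v" using fin v by simp
    ultimately show ?thesis using g pv unfolding N_def plen_def by simp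
  qed
  then show ?thesis by blast
qed

lemma finite_paths:
  assumes "finite_bq Q" "nicely_graded Q"
  shows "finite {p. is_path Q p}"
proof -
  obtain N where N: "\<forall>p. is_path Q p \<longrightarrow> plen p \<le> N" using path_length_bounded[OF assms] by blast
  have "{p. is_path Q p} \<subseteq> verts Q \<times> {L. set L \<subseteq> arrs Q \<and> length L \<le> N}"
  proof
    fix p assume "p \<in> {p. is_path Q p}"
    then have p: "is_path Q p" by simp
    have "length (snd p) \<le> N" using N p unfolding plen_def by blast
    moreover have "fst p \<in> verts Q" "set (snd p) \<subseteq> arrs Q" using p unfolding is_path_def by auto
    ultimately show "p \<in> verts Q \<times> {L. set L \<subseteq> arrs Q \<and> length L \<le> N}" by (cases p) auto
  qed
  moreover have "finite (verts Q \<times> {L. set L \<subseteq> arrs Q \<and> length L \<le> N})"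
    using assms(1) unfolding finite_bq_def by (intro finite_cartesian_product finite_lists_length_le) auto
  ultimately show ?thesis by (rule finite_subset)
qed

lemma not_maximal_extends:
  "bound_path Q p \<Longrightarrow> \<not> maximal_bound_path Q p \<Longrightarrow>
   \<exists>\<alpha>\<in>arrs Q. (src Q \<alpha> = ptgt Q p \<and> bound_path Q (fst p, \<alpha> # snd p)) \<or>
               (tgt Q \<alpha> = fst p \<and> bound_path Q (src Q \<alpha>, snd p @ [\<alpha>]))"
  unfolding maximal_bound_path_def by blast

lemma bound_path_length_le:
  assumes fin: "finite_bq Q" and ng: "m_nicely_graded m Q" and b: "bound_path Q p"
  shows "plen p \<le> m"
proof -
  have pg: "properly_graded m Q" and ngr: "nicely_graded Q"
    using ng unfolding m_nicely_graded_def by auto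
  obtain N where N: "\<forall>p. is_path Q p \<longrightarrow> plen p \<le> N"
    using path_length_bounded[OF fin ngr] by blast
  show ?thesis using b
  proof (induction "N - plen p" arbitrary: p rule: less_induct)
    case less
    show ?case
    proof (cases "maximal_bound_path Q p")
      case True
      then have "plen p = m" using pg unfolding properly_graded_def by blast
      then show ?thesis by simp
    next
      case False
      then obtain p' where p': "bound_path Q p'" "plen p' = Suc (plen p)"
        using not_maximal_extends[OF less.prems] unfolding plen_def by auto
      have "plen p' \<le> N" using N p'(1) unfolding bound_path_def by blast
      then have "plen p' \<le> m" using less.hyps[OF _ p'(1)] p'(2) by simp
      then show ?thesis using p'(2) by simp
    qed
  qed
qed

lemma ex_mbasis:
  assumes fin: "finite_bq Q" and ng: "m_nicely_graded m Q"
  shows "\<exists>M. is_mbasis Q m M"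
proof -
  define P where "P = {q. is_path Q q \<and> plen q = m}"
  have ngr: "nicely_graded Q" using ng unfolding m_nicely_graded_def by blast
  have "finite P" unfolding P_def by (rule finite_subset[OF _ finite_paths[OF fin ngr]]) auto
  then obtain M where MP: "M \<subseteq> P" and indep: "lin_indep_mod Q M" and span: "\<forall>q\<in>P. in_span_mod Q M q"
    by (rule ex_basis_mod_ideal)
  have finite_M: "finite M" using MP \<open>finite P\<close> by (rule finite_subset)
  have too_long: "\<not> bound_path Q p'" if "plen p' = Suc m" for p'
    using bound_path_length_le[OF fin ng, of p'] that by auto
  have "maximal_bound_path Q p" if pM: "p \<in> M" for p
  proof -
    have "ebasis p \<notin> ideal_of Q"
    proof
      assume "ebasis p \<in> ideal_of Q"
      then have "lincomb M (\<lambda>q. if q = p then 1 else 0) \<in> ideal_of Q"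
        by (simp add: lincomb_indicator[OF finite_M pM])
      then have "(\<lambda>q. if q = p then (1::'c) else 0) p = 0" using indep pM by blast
      then show False by simp
    qed
    moreover have p: "is_path Q p" "plen p = m" using pM MP unfolding P_def by auto
    ultimately have "bound_path Q p" unfolding bound_path_def by blast
    moreover have "\<not> bound_path Q (fst p, \<alpha> # snd p)" "\<not> bound_path Q (src Q \<alpha>, snd p @ [\<alpha>])" for \<alpha>
      using too_long p(2) by (simp_all add: plen_def)
    ultimately show ?thesis unfolding maximal_bound_path_def by blast
  qed
  moreover have "\<forall>q. is_path Q q \<and> plen q = m \<longrightarrow> in_span_mod Q M q"
    using span unfolding P_def by blast
  moreover have "plen p = m" if "p \<in> M" for p using that MP unfolding P_def by blast
  ultimately have "is_mbasis Q m M" unfolding is_mbasis_def using finite_M indep by blast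
  then show ?thesis ..
qed

text \<open>\<theta> is a coordinate functional for a basis of \<open>kQ\<close> modulo the ideal in which \<open>w\<close>
  has a nonzero coordinate.\<close>

lemma ex_functional_annihilating:
  assumes fin: "finite_bq Q" and ngr: "nicely_graded Q" and bw: "bound_path Q w"
  shows "\<exists>\<theta>. (\<forall>a\<in>ideal_of Q. pairing \<theta> a = 0) \<and> \<theta> w \<noteq> 0"
proof -
  have bq: "bound_quiver Q" using ngr unfolding nicely_graded_def by blast
  define P where "P = {p. is_path Q p}"
  have finP: "finite P" unfolding P_def by (rule finite_paths[OF fin ngr])
  then obtain M where MP: "M \<subseteq> P" and indep: "lin_indep_mod Q M" and span: "\<forall>q\<in>P. in_span_mod Q M q"
    by (rule ex_basis_mod_ideal)
  have finite_M: "finite M" using MP finP by (rule finite_subset)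
  define cf where "cf q = (SOME c. (\<lambda>z. ebasis q z - lincomb M c z) \<in> ideal_of Q)" for q
  have cf: "(\<lambda>z. ebasis q z - lincomb M (cf q) z) \<in> ideal_of Q" if "q \<in> P" for q
  proof -
    have "in_span_mod Q M q" using span that by blast
    then show ?thesis unfolding cf_def by (rule someI_ex)
  qed
  have wP: "w \<in> P" using bw unfolding bound_path_def P_def by simp
  obtain p0 where p0: "p0 \<in> M" "cf w p0 \<noteq> 0"
  proof (rule ccontr)
    assume "\<not> thesis"
    then have "lincomb M (cf w) = (\<lambda>_. 0)" using that by (intro lincomb_zero_on) blast
    then have "ebasis w \<in> ideal_of Q" using cf[OF wP] by simp
    then show False using bw unfolding bound_path_def by simp
  qed
  have "pairing (\<lambda>q. cf q p0) a = 0" if a: "a \<in> ideal_of Q" for a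
  proof -
    have fa: "fin_supp a" using fin_supp_ideal[OF bound_quiver_fin_supp_rels[OF bq] a] .
    have sub: "{z. a z \<noteq> 0} \<subseteq> P"
      using ideal_of_support_paths[OF bound_quiver_rels_paths[OF bq] a] unfolding P_def by blast
    have "\<forall>p\<in>M. (\<Sum>z\<in>{z. a z \<noteq> 0}. a z * cf z p) = 0"
      by (rule ideal_coordinates_eq_0[OF indep finite_M a fa order_refl]) (use cf sub in blast)
    then show ?thesis using p0 unfolding pairing_def by blast
  qed
  then show ?thesis using p0 by blast
qed

section \<open>Coordinates with respect to a basis of \<open>\<Lambda>\<^sub>m\<close>\<close>

definition coords :: "('V,'A,'k::field) bquiver \<Rightarrow> ('V \<times> 'A list) set \<Rightarrow> 'V \<times> 'A list \<Rightarrow> ('V \<times> 'A list \<Rightarrow> 'k) \<Rightarrow> bool" where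
  "coords Q M q c \<longleftrightarrow> (\<forall>p. p \<notin> M \<longrightarrow> c p = 0) \<and> (\<lambda>z. ebasis q z - lincomb M c z) \<in> ideal_of Q"

lemma lincomb_apply: "finite M \<Longrightarrow> lincomb M c z = (if z \<in> M then c z else 0)"
proof -
  assume fM: "finite M"
  have "lincomb M c z = (\<Sum>p\<in>M. if z = p then c p else 0)"
    unfolding lincomb_def by (rule sum.cong) (auto simp: ebasis_def)
  also have "\<dots> = (if z \<in> M then c z else 0)" using fM by simp
  finally show ?thesis .
qed

lemma lincomb_sub: "lincomb M (\<lambda>q. c1 q - c2 q) z = lincomb M c1 z - lincomb M c2 z"
  unfolding lincomb_def by (simp add: algebra_simps sum_subtractf)

lemma coords_unique:
  assumes mb: "is_mbasis Q m M" and c1: "coords Q M q c1" and c2: "coords Q M q c2"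
  shows "c1 = c2"
proof -
  have indep: "lin_indep_mod Q M" using mb unfolding is_mbasis_def by blast
  have "(\<lambda>z. (ebasis q z - lincomb M c2 z) - (ebasis q z - lincomb M c1 z)) \<in> ideal_of Q"
    using ideal_of_diff[of "\<lambda>z. ebasis q z - lincomb M c2 z" Q "\<lambda>z. ebasis q z - lincomb M c1 z"] c1 c2
    unfolding coords_def by blast
  moreover have "(\<lambda>z. (ebasis q z - lincomb M c2 z) - (ebasis q z - lincomb M c1 z))
      = lincomb M (\<lambda>p. c1 p - c2 p)"
    by (rule ext) (simp add: lincomb_sub)
  ultimately have "lincomb M (\<lambda>p. c1 p - c2 p) \<in> ideal_of Q" by simp
  then have "\<forall>p\<in>M. c1 p - c2 p = 0" using indep by blast
  then show ?thesis using c1 c2 unfolding coords_def by (metis eq_iff_diff_eq_0 ext)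
qed

lemma ex_coords:
  assumes mb: "is_mbasis Q m M" and q: "is_path Q q" "plen q = m"
  shows "\<exists>c. coords Q M q c"
proof -
  obtain c where c: "(\<lambda>z. ebasis q z - lincomb M c z) \<in> ideal_of Q"
    using mb q unfolding is_mbasis_def by blast
  define c' where "c' = (\<lambda>p. if p \<in> M then c p else 0)"
  have "lincomb M c' = lincomb M c" unfolding lincomb_def c'_def by (rule ext, rule sum.cong) auto
  then show ?thesis using c unfolding coords_def c'_def by (intro exI[of _ c']) (auto simp: c'_def)
qed

lemma coords_dualf:
  assumes mb: "is_mbasis Q m M" and q: "is_path Q q" "plen q = m"
  shows "coords Q M q (\<lambda>p. dualf Q m M p q)"
proof -
  have ex1: "\<exists>!c. coords Q M q c" using ex_coords[OF mb q] coords_unique[OF mb] by blast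
  have "(\<lambda>p. dualf Q m M p q) = (THE c. coords Q M q c)"
    unfolding dualf_def coords_def using q by simp
  then show ?thesis using theI'[OF ex1] by simp
qed

lemma dualf_eq:
  assumes mb: "is_mbasis Q m M" and q: "is_path Q q" "plen q = m" and c: "coords Q M q c"
  shows "dualf Q m M p q = c p"
  using coords_unique[OF mb coords_dualf[OF mb q] c] by metis

lemma dualf_nonzero: "dualf Q m M p q \<noteq> 0 \<Longrightarrow> is_path Q q \<and> plen q = m"
  unfolding dualf_def by (auto split: if_splits)

lemma mbasis_path: "is_mbasis Q m M \<Longrightarrow> p \<in> M \<Longrightarrow> is_path Q p \<and> plen p = m"
  unfolding is_mbasis_def maximal_bound_path_def bound_path_def by blast

lemma dualf_basis:
  assumes mb: "is_mbasis Q m M" and pM: "p \<in> M"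
  shows "dualf Q m M p' p = (if p' = p then 1 else 0)"
proof -
  have finite_M: "finite M" using mb unfolding is_mbasis_def by blast
  have "coords Q M p (\<lambda>q. if q = p then 1 else 0)"
    unfolding coords_def lincomb_indicator[OF finite_M pM] using pM by (auto simp: ideal_of.zero)
  from dualf_eq[OF mb _ _ this] mbasis_path[OF mb pM] show ?thesis by blast
qed

lemma ex_dualf_nonzero:
  assumes mb: "is_mbasis Q m M" and b: "bound_path Q w" and wm: "plen w = m"
  shows "\<exists>p\<in>M. dualf Q m M p w \<noteq> 0"
proof (rule ccontr)
  assume "\<not> (\<exists>p\<in>M. dualf Q m M p w \<noteq> 0)"
  then have "lincomb M (\<lambda>p. dualf Q m M p w) = (\<lambda>_. 0)" by (intro lincomb_zero_on) blast
  moreover have "coords Q M w (\<lambda>p. dualf Q m M p w)"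
    using b wm unfolding bound_path_def by (intro coords_dualf[OF mb]) auto
  ultimately have "ebasis w \<in> ideal_of Q" unfolding coords_def by simp
  then show False using b unfolding bound_path_def by simp
qed

text \<open>Restricting to paths from \<open>fst q\<close> to \<open>ptgt Q q\<close> preserves the ideal, so the coordinates of \<open>q\<close>
  live on basis paths with the same endpoints.\<close>

lemma dualf_ends:
  assumes mb: "is_mbasis Q m M" and bq: "bound_quiver Q" and nz: "dualf Q m M p q \<noteq> 0"
  shows "fst p = fst q \<and> ptgt Q p = ptgt Q q"
proof -
  have q: "is_path Q q" "plen q = m" using dualf_nonzero[OF nz] by auto
  have finite_M: "finite M" using mb unfolding is_mbasis_def by blast
  define c where "c = (\<lambda>p. dualf Q m M p q)"
  have cs: "coords Q M q c" unfolding c_def by (rule coords_dualf[OF mb q])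
  define E where "E = (\<lambda>z. fst z = fst q \<and> ptgt Q z = ptgt Q q)"
  define c' where "c' = (\<lambda>p. if E p then c p else 0)"
  have "(\<lambda>z. if fst z = fst q \<and> ptgt Q z = ptgt Q q
      then ebasis q z - lincomb M c z else 0) \<in> ideal_of Q"
    using cs unfolding coords_def by (intro ideal_of_restrict_ends[OF bound_quiver_fin_supp_rels[OF bq]]) auto
  moreover have "(\<lambda>z. if fst z = fst q \<and> ptgt Q z = ptgt Q q then ebasis q z - lincomb M c z else 0)
      = (\<lambda>z. ebasis q z - lincomb M c' z)"
    unfolding lincomb_apply[OF finite_M] c'_def E_def by (rule ext) (auto simp: ebasis_def)
  ultimately have "coords Q M q c'" using cs unfolding coords_def c'_def by auto
  then have "c' = c" using coords_unique[OF mb _ cs] by blast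
  then have "c' p \<noteq> 0" using nz unfolding c_def by simp
  then show ?thesis unfolding c'_def E_def by (auto split: if_splits)
qed

lemma dual_act_pcomp:
  assumes "ptgt Q x = fst X0" "ptgt Q X0 = fst z" "ptgt Q z = fst Y0" "ptgt Q Y0 = fst y"
  shows "dual_act Q m M (pcomp X0 x) p (pcomp y Y0) z
      = dual_act Q m M x p y (pcomp Y0 (pcomp z X0))"
proof -
  have "ptgt Q (pcomp X0 x) = ptgt Q X0" "ptgt Q (pcomp Y0 (pcomp z X0)) = ptgt Q Y0"
    using assms by (simp_all add: ptgt_pcomp)
  moreover have "pcomp (pcomp y Y0) (pcomp z (pcomp X0 x))
      = pcomp y (pcomp (pcomp Y0 (pcomp z X0)) x)"
    by (simp add: pcomp_def)
  ultimately show ?thesis using assms unfolding dual_act_def by (simp add: pcomp_def)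
qed

lemma plen_pcomp: "plen (pcomp q p) = plen q + plen p"
  by (simp add: plen_def pcomp_def)

lemma mul3_rel_homogeneous:
  assumes bq: "bound_quiver Q" and r: "r \<in> rels Q" and x: "is_path Q x" and y: "is_path Q y"
    and z: "mul3 Q x r y z \<noteq> 0" and z': "mul3 Q x r y z' \<noteq> 0"
  shows "is_path Q z \<and> plen z' = plen z"
proof -
  have rel: "is_relation Q r" using bq r unfolding bound_quiver_def by blast
  obtain w where w: "r w \<noteq> 0" "fst w = ptgt Q y" "ptgt Q w = fst x" "z = pcomp x (pcomp w y)"
    using support_mul3[OF z] by blast
  obtain w' where w': "r w' \<noteq> 0" "z' = pcomp x (pcomp w' y)"
    using support_mul3[OF z'] by blast
  have "is_path Q w" using rel w(1) unfolding is_relation_def by blast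
  then have "is_path Q (pcomp w y)" using y w(2) by (intro is_path_pcomp) auto
  moreover have "ptgt Q (pcomp w y) = fst x" using w by (subst ptgt_pcomp) auto
  ultimately have "is_path Q z" using x w by (simp add: is_path_pcomp)
  moreover have "plen w' = plen w" using rel w(1) w'(1) unfolding is_relation_def by blast
  ultimately show ?thesis using w w' by (simp add: plen_pcomp)
qed

text \<open>A generator \<open>x r y\<close> of the ideal is homogeneous: off degree \<open>m\<close> the functional \<open>p\<^sup>*\<close> vanishes
  on it, and in degree \<open>m\<close> its pairing with \<open>p\<^sup>*\<close> is a coordinate of an element of the ideal.\<close>

lemma pairing_dualf_ideal:
  assumes mb: "is_mbasis Q m M" and bq: "bound_quiver Q"
  shows "a \<in> ideal_of Q \<Longrightarrow> pairing (dualf Q m M p) a = 0"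
proof (rule pairing_ideal_eq_0[OF bound_quiver_fin_supp_rels[OF bq]])
  fix r x y assume r: "r \<in> rels Q" and x: "is_path Q x" and y: "is_path Q y"
  define b where "b = mul3 Q x r y"
  have bI: "b \<in> ideal_of Q" unfolding b_def using r x y by (rule ideal_of.gen)
  have fb: "fin_supp b" using fin_supp_ideal[OF bound_quiver_fin_supp_rels[OF bq] bI] .
  show "pairing (dualf Q m M p) (mul3 Q x r y) = 0"
  proof (cases "\<exists>z0. b z0 \<noteq> 0 \<and> plen z0 = m")
    case False
    have "dualf Q m M p z = 0" if "b z \<noteq> 0" for z
      using False that dualf_nonzero by blast
    then show ?thesis unfolding b_def[symmetric] pairing_def by simp
  next
    case True
    then obtain z0 where z0: "b z0 \<noteq> 0" "plen z0 = m" by blast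
    have zm: "coords Q M z (\<lambda>p. dualf Q m M p z)" if bz: "b z \<noteq> 0" for z
    proof -
      have "is_path Q z \<and> plen z0 = plen z"
        using mul3_rel_homogeneous[OF bq r x y] bz z0(1) unfolding b_def by blast
      then show ?thesis using z0(2) coords_dualf[OF mb] by auto
    qed
    show ?thesis
    proof (cases "p \<in> M")
      case True
      have indep: "lin_indep_mod Q M" and finite_M: "finite M"
        using mb unfolding is_mbasis_def by blast+
      have "\<forall>p\<in>M. (\<Sum>z\<in>{z. b z \<noteq> 0}. b z * dualf Q m M p z) = 0"
      proof (rule ideal_coordinates_eq_0[OF indep finite_M bI fb order_refl])
        fix z assume "z \<in> {z. b z \<noteq> 0}"
        then show "(\<lambda>u. ebasis z u - lincomb M (\<lambda>p. dualf Q m M p z) u) \<in> ideal_of Q"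
          using zm unfolding coords_def by blast
      qed
      then show ?thesis using True unfolding b_def[symmetric] pairing_def by blast
    next
      case False
      have "dualf Q m M p z = 0" if "b z \<noteq> 0" for z
        using zm[OF that] False unfolding coords_def by blast
      then show ?thesis unfolding b_def[symmetric] pairing_def by simp
    qed
  qed
qed

text \<open>\<open>strip\<close> maps a path of \<open>Q\<^sup>^\<close> to the path of \<open>Q\<close> formed by its copied arrows \<open>\<alpha>\<^sup>[\<^sup>r\<^sup>]\<close>;
  \<open>lift r w\<close> is the copy \<open>w\<^sup>[\<^sup>r\<^sup>]\<close>, and \<open>split_beta\<close> reads \<open>(x, s, p, y)\<close> off
  \<open>x\<^sup>[\<^sup>m\<^sup>+\<^sup>1\<^sup>] \<beta>\<^sub>p y\<^sup>[\<^sup>0\<^sup>]\<close>, where \<open>s\<close> is the source of \<open>p\<close>.\<close>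

fun is_gam :: "('v,'a) arr \<Rightarrow> bool" where
  "is_gam (Gam i r) = True"
| "is_gam _ = False"

fun is_beta :: "('v,'a) arr \<Rightarrow> bool" where
  "is_beta (Beta s as) = True"
| "is_beta _ = False"

definition n_gam :: "('v,'a) arr list \<Rightarrow> nat" where
  "n_gam L = length (filter is_gam L)"

definition n_beta :: "('v,'a) arr list \<Rightarrow> nat" where
  "n_beta L = length (filter is_beta L)"

fun strip_arr :: "('v,'a) arr \<Rightarrow> ('v,'a) arr list" where
  "strip_arr (ACopy \<alpha> r) = [\<alpha>]"
| "strip_arr _ = []"

definition strip :: "('v,'a) arr list \<Rightarrow> ('v,'a) arr list" where
  "strip L = concat (map strip_arr L)"

fun base_vert :: "'v vert \<Rightarrow> 'v vert" where
  "base_vert (Lay i r) = i"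
| "base_vert (BaseV v) = BaseV v"

fun layer :: "'v vert \<Rightarrow> nat" where
  "layer (Lay i r) = r"
| "layer (BaseV v) = 0"

definition lift :: "nat \<Rightarrow> ('v,'a) arr list \<Rightarrow> ('v,'a) arr list" where
  "lift r w = map (\<lambda>\<alpha>. ACopy \<alpha> r) w"

fun split_beta :: "('v,'a) arr list \<Rightarrow> ('v,'a) arr list \<times> 'v vert \<times> ('v,'a) arr list \<times> ('v,'a) arr list"
  where
  "split_beta [] = ([], undefined, [], [])"
| "split_beta (Beta s as # L) = ([], s, as, strip L)"
| "split_beta (a # L) = (case split_beta L of (X, s, as, Y) \<Rightarrow> (strip_arr a @ X, s, as, Y))"

lemma n_gam_simps [simp]:
  "n_gam [] = 0" "n_gam (a # L) = (if is_gam a then Suc (n_gam L) else n_gam L)"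
  "n_gam (A @ B) = n_gam A + n_gam B"
  by (auto simp: n_gam_def)

lemma n_beta_simps [simp]:
  "n_beta [] = 0" "n_beta (a # L) = (if is_beta a then Suc (n_beta L) else n_beta L)"
  "n_beta (A @ B) = n_beta A + n_beta B"
  by (auto simp: n_beta_def)

lemma strip_simps [simp]:
  "strip [] = []" "strip (a # L) = strip_arr a @ strip L" "strip (A @ B) = strip A @ strip B"
  by (auto simp: strip_def)

lemma lift_simps [simp]:
  "lift r [] = []" "lift r (a # L) = ACopy a r # lift r L" "lift r (A @ B) = lift r A @ lift r B"
  by (auto simp: lift_def)

lemma lift_counts [simp]: "strip (lift r w) = w" "n_gam (lift r w) = 0" "n_beta (lift r w) = 0"
  by (induction w) auto

lemma length_lift [simp]: "length (lift r w) = length w"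
  by (simp add: lift_def)

lemma split_beta_lift: "split_beta (lift a X @ Beta s as # lift b Y) = (X, s, as, Y)"
  by (induction X) auto

lemma pcopy_lift: "pcopy r p = (Lay (fst p) r, lift r (snd p))"
  by (simp add: pcopy_def lift_def)

lemma pcomp_pcopy: "pcomp (v1, L1) (pcomp (pcopy t (v0, W0)) (v2, L2)) = (v2, L1 @ lift t W0 @ L2)"
  by (simp add: pcomp_def pcopy_lift)

lemma bpath_lift:
  "bpath m (x, p, y) = (Lay (fst y) 0, lift (Suc m) (snd x)
      @ Beta (fst p) (snd p) # lift 0 (snd y))"
  by (simp add: bpath_def lift_def)

section \<open>The multi-layer quiver\<close>

locale multilayer_context =
  fixes Q :: "('v,'a,'k::field) uquiver" and m :: nat and M :: "('v vert \<times> ('v,'a) arr list) set"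
  assumes fin: "finite_bq Q" and ngd: "m_nicely_graded m Q" and mb: "is_mbasis Q m M"
begin

abbreviation "Qh \<equiv> multilayer Q m M"

lemma nicely_graded_Q: "nicely_graded Q" using ngd unfolding m_nicely_graded_def by blast
lemma bound_quiver_Q: "bound_quiver Q" using nicely_graded_Q unfolding nicely_graded_def by blast
lemma fin_supp_rels_Q: "fin_supp_rels Q" by (rule bound_quiver_fin_supp_rels[OF bound_quiver_Q])
lemma finite_M: "finite M" using mb unfolding is_mbasis_def by blast
lemma M_path: "p \<in> M \<Longrightarrow> is_path Q p \<and> plen p = m" by (rule mbasis_path[OF mb])

lemma Qh_verts: "verts Qh = {Lay i r | i r. i \<in> verts Q \<and> r \<le> Suc m}"
  by (simp add: multilayer_def ml_base_def)
lemma Qh_arrs: "arrs Qh = {ACopy \<alpha> r | \<alpha> r. \<alpha> \<in> arrs Q \<and> r \<le> Suc m}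
          \<union> {Gam i r | i r. i \<in> verts Q \<and> r \<le> m}
          \<union> {Beta (fst p) (snd p) | p. p \<in> M}"
  by (simp add: multilayer_def ml_base_def)
lemma Qh_src[simp]: "src Qh = msrc Q" by (simp add: multilayer_def ml_base_def)
lemma Qh_tgt[simp]: "tgt Qh = mtgt Q m" by (simp add: multilayer_def ml_base_def)
lemma Lay_in_verts[simp]: "Lay i r \<in> verts Qh \<longleftrightarrow> i \<in> verts Q \<and> r \<le> Suc m" by (simp add: Qh_verts)
lemma BaseV_notin_verts[simp]: "BaseV v \<notin> verts Qh" by (simp add: Qh_verts)
lemma ACopy_in_arrs[simp]: "ACopy \<alpha> r \<in> arrs Qh \<longleftrightarrow> \<alpha> \<in> arrs Q \<and> r \<le> Suc m" by (auto simp: Qh_arrs)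
lemma Gam_in_arrs[simp]: "Gam i r \<in> arrs Qh \<longleftrightarrow> i \<in> verts Q \<and> r \<le> m" by (auto simp: Qh_arrs)
lemma Beta_in_arrs[simp]: "Beta s as \<in> arrs Qh \<longleftrightarrow> (s, as) \<in> M" by (auto simp: Qh_arrs)
lemma BaseA_notin_arrs[simp]: "BaseA a \<notin> arrs Qh" by (auto simp: Qh_arrs)

lemma Qh_rels: "rels Qh = {pushf (pcopy r) \<rho> | \<rho> r. \<rho> \<in> rels Q \<and> r \<le> Suc m}
      \<union> {ebasis (Lay i r, [Gam i (Suc r), Gam i r]) | i r. i \<in> verts Q \<and> r < m}
      \<union> {(\<lambda>z. ebasis (Lay (src Q \<alpha>) r, [ACopy \<alpha> (Suc r), Gam (src Q \<alpha>) r]) z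
              - ebasis (Lay (src Q \<alpha>) r, [Gam (tgt Q \<alpha>) r, ACopy \<alpha> r]) z)
          | \<alpha> r. \<alpha> \<in> arrs Q \<and> r \<le> m}
      \<union> rho_M Q m M"
  by (simp add: multilayer_def)

lemma is_path_ml: "is_path (ml_base Q m M) = is_path Qh"
  by (rule ext) (simp add: is_path_def multilayer_def)
lemma ptgt_ml: "ptgt (ml_base Q m M) = ptgt Qh"
  by (rule ext) (simp add: ptgt_def multilayer_def)
lemma is_relation_ml: "is_relation (ml_base Q m M) = is_relation Qh"
  by (rule ext) (simp add: is_relation_def is_path_ml ptgt_ml)

lemma path_Qh_cases:
  assumes "is_path Qh X"
  obtains i r L where "X = (Lay i r, L)" "is_path Qh (Lay i r, L)"
proof -
  obtain v L where X: "X = (v, L)" by (cases X)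
  moreover obtain i r where "v = Lay i r" using assms X by (cases v) (auto simp: is_path_def)
  ultimately show thesis using that assms by blast
qed

lemma is_path_pcopy: "is_path Q (v, L) \<Longrightarrow> r \<le> Suc m \<Longrightarrow> is_path Qh (pcopy r (v, L))"
proof (induction L)
  case Nil then show ?case by (simp add: pcopy_lift is_path_def)
next
  case (Cons a L)
  then show ?case by (cases L) (auto simp: pcopy_lift is_path_Cons)
qed

lemma ptgt_pcopy: "ptgt Qh (pcopy r p) = Lay (ptgt Q p) r"
  by (cases p; cases "snd p") (auto simp: pcopy_lift ptgt_def lift_def)

lemma ptgt_lift: "ptgt Qh (Lay i r, lift r L) = Lay (ptgt Q (i, L)) r"
  using ptgt_pcopy[of r "(i, L)"] by (simp add: pcopy_lift)

lemma pcopy_pcomp: "pcopy r (pcomp q p) = pcomp (pcopy r q) (pcopy r p)"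
  by (simp add: pcopy_lift pcomp_def)

lemma plen_pcopy: "plen (pcopy r p) = plen p" by (simp add: pcopy_lift plen_def)

lemma beta_free_path:
  "is_path Qh (Lay i r, L) \<Longrightarrow> n_beta L = 0 \<Longrightarrow>
     is_path Q (i, strip L) \<and> ptgt Qh (Lay i r, L) = Lay (ptgt Q (i, strip L)) (r + n_gam L)
     \<and> (n_gam L = 0 \<longrightarrow> L = lift r (strip L))"
proof (induction L)
  case Nil then show ?case by simp
next
  case (Cons a L)
  have pL: "is_path Qh (Lay i r, L)" and aA: "a \<in> arrs Qh" and sa: "msrc Q a = ptgt Qh (Lay i r, L)"
    using Cons.prems(1) by (auto simp: is_path_Cons)
  have nbL: "n_beta L = 0" and nbB: "\<not> is_beta a" using Cons.prems(2) by (auto split: if_splits)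
  have IH: "is_path Q (i, strip L)" "ptgt Qh (Lay i r, L) = Lay (ptgt Q (i, strip L)) (r + n_gam L)"
      "n_gam L = 0 \<longrightarrow> L = lift r (strip L)"
    using Cons.IH[OF pL nbL] by auto
  show ?case
  proof (cases a)
    case (BaseA x) then show ?thesis using aA by simp
  next
    case (ACopy \<alpha> s)
    then have \<alpha>: "\<alpha> \<in> arrs Q" using aA by simp
    have "Lay (src Q \<alpha>) s = Lay (ptgt Q (i, strip L)) (r + n_gam L)" using sa IH(2) ACopy by simp
    then have e: "src Q \<alpha> = ptgt Q (i, strip L)" "s = r + n_gam L" by auto
    have "is_path Q (i, \<alpha> # strip L)" using IH(1) \<alpha> e by (simp add: is_path_Cons)
    then show ?thesis using ACopy IH e by auto
  next
    case (Gam k s)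
    have "Lay k s = Lay (ptgt Q (i, strip L)) (r + n_gam L)" using sa IH(2) Gam by simp
    then have e: "k = ptgt Q (i, strip L)" "s = r + n_gam L" by auto
    then show ?thesis using Gam IH by auto
  next
    case (Beta s as) then show ?thesis using nbB by simp
  qed
qed

lemma beta_path_decomp:
  "is_path Qh (Lay i r, L) \<Longrightarrow> n_beta L \<noteq> 0 \<Longrightarrow>
     \<exists>X s as Y. L = lift (Suc m) X @ Beta s as # lift 0 Y \<and> (s, as) \<in> M \<and> r = 0
       \<and> is_path Q (i, Y) \<and> ptgt Q (i, Y) = ptgt Q (s, as) \<and> is_path Q (s, X)
       \<and> ptgt Qh (Lay i r, L) = Lay (ptgt Q (s, X)) (Suc m)"
proof (induction L)
  case Nil then show ?case by simp
next
  case (Cons a L)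
  have pL: "is_path Qh (Lay i r, L)" and aA: "a \<in> arrs Qh" and sa: "msrc Q a = ptgt Qh (Lay i r, L)"
    using Cons.prems(1) by (auto simp: is_path_Cons)
  show ?case
  proof (cases "n_beta L = 0")
    case True
    then have "is_beta a" using Cons.prems(2) by (auto split: if_splits)
    then obtain s as where a: "a = Beta s as" by (cases a) auto
    have sM: "(s, as) \<in> M" using aA a by simp
    have A: "is_path Q (i, strip L)" "ptgt Qh (Lay i r, L) = Lay (ptgt Q (i, strip L)) (r + n_gam L)"
      "n_gam L = 0 \<longrightarrow> L = lift r (strip L)" using beta_free_path[OF pL True] by auto
    have "Lay (ptgt Q (s, as)) 0 = Lay (ptgt Q (i, strip L)) (r + n_gam L)" using sa A(2) a by simp
    then have e: "ptgt Q (s, as) = ptgt Q (i, strip L)" "r = 0" "n_gam L = 0" by auto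
    have L: "L = lift 0 (strip L)" using A(3) e by simp
    have sv: "s \<in> verts Q" using M_path[OF sM] by (simp add: is_path_def)
    show ?thesis using a sM e A L sv
      by (intro exI[of _ "[]"] exI[of _ s] exI[of _ as] exI[of _ "strip L"]) simp
  next
    case False
    obtain X s as Y where IH: "L = lift (Suc m) X @ Beta s as # lift 0 Y" "(s, as) \<in> M" "r = 0"
       "is_path Q (i, Y)" "ptgt Q (i, Y) = ptgt Q (s, as)" "is_path Q (s, X)"
       "ptgt Qh (Lay i r, L) = Lay (ptgt Q (s, X)) (Suc m)"
      using Cons.IH[OF pL False] by blast
    show ?thesis
    proof (cases a)
      case (BaseA x) then show ?thesis using aA by simp
    next
      case (ACopy \<alpha> t)
      then have \<alpha>: "\<alpha> \<in> arrs Q" using aA by simp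
      have "Lay (src Q \<alpha>) t = Lay (ptgt Q (s, X)) (Suc m)" using sa IH(7) ACopy by simp
      then have e: "src Q \<alpha> = ptgt Q (s, X)" "t = Suc m" by auto
      have "is_path Q (s, \<alpha> # X)" using IH(6) \<alpha> e by (simp add: is_path_Cons)
      then show ?thesis using ACopy IH e
        by (intro exI[of _ "\<alpha> # X"] exI[of _ s] exI[of _ as] exI[of _ Y]) simp
    next
      case (Gam k t)
      then have "t \<le> m" using aA by simp
      moreover have "Lay k t = Lay (ptgt Q (s, X)) (Suc m)" using sa IH(7) Gam by simp
      ultimately show ?thesis by simp
    next
      case (Beta s' as')
      have "Lay (ptgt Q (s', as')) 0 = Lay (ptgt Q (s, X)) (Suc m)" using sa IH(7) Beta by simp
      then show ?thesis by simp
    qed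
  qed
qed

lemma length_strip_counts: "set L \<subseteq> arrs Qh \<Longrightarrow> length L = length (strip L) + n_gam L + n_beta L"
proof (induction L)
  case Nil then show ?case by simp
next
  case (Cons a L) then show ?case by (cases a) auto
qed

lemma is_relation_copy:
  assumes \<rho>: "\<rho> \<in> rels Q" and r: "r \<le> Suc m"
  shows "is_relation Qh (pushf (pcopy r) \<rho>)"
proof -
  have rel: "is_relation Q \<rho>" using bound_quiver_Q \<rho> unfolding bound_quiver_def by blast
  have f\<rho>: "fin_supp \<rho>" using rel unfolding is_relation_def by blast
  have supp: "\<exists>w0. \<rho> w0 \<noteq> 0 \<and> w = pcopy r w0" if "pushf (pcopy r) \<rho> w \<noteq> 0" for w
  proof -
    have "w \<in> pcopy r ` {w. \<rho> w \<noteq> 0}" using subsetD[OF support_pushf[of "pcopy r" \<rho>]] that by simp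
    then show ?thesis by auto
  qed
  have P1: "is_path Qh w \<and> 2 \<le> plen w" if nz: "pushf (pcopy r) \<rho> w \<noteq> 0" for w
  proof -
    obtain w0 where w0: "\<rho> w0 \<noteq> 0" "w = pcopy r w0" using supp[OF nz] by blast
    have "is_path Q w0" "2 \<le> plen w0" using rel w0(1) unfolding is_relation_def by blast+
    then show ?thesis using w0 is_path_pcopy[of "fst w0" "snd w0" r] r by (simp add: plen_pcopy)
  qed
  have P2: "fst w = fst w' \<and> ptgt Qh w = ptgt Qh w' \<and> plen w = plen w'"
    if nz: "pushf (pcopy r) \<rho> w \<noteq> 0" "pushf (pcopy r) \<rho> w' \<noteq> 0" for w w'
  proof -
    obtain w0 where w0: "\<rho> w0 \<noteq> 0" "w = pcopy r w0" using supp[OF nz(1)] by blast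
    obtain w0' where w0': "\<rho> w0' \<noteq> 0" "w' = pcopy r w0'" using supp[OF nz(2)] by blast
    have "fst w0 = fst w0' \<and> ptgt Q w0 = ptgt Q w0' \<and> plen w0 = plen w0'"
      using rel w0 w0' unfolding is_relation_def by blast
    then show ?thesis using w0 w0' by (simp only: ptgt_pcopy plen_pcopy, simp add: pcopy_lift)
  qed
  show ?thesis unfolding is_relation_def using fin_supp_pushf[OF f\<rho>] P1 P2 by blast
qed

lemma is_relation_ebasis:
  assumes "is_path Qh u" "2 \<le> plen u"
  shows "is_relation Qh (ebasis u :: _ \<Rightarrow> 'k)"
  unfolding is_relation_def using assms fin_supp_ebasis[of u] by (auto simp: ebasis_def)

lemma is_relation_gam_gam:
  assumes "i \<in> verts Q" "r < m"
  shows "is_relation Qh (ebasis (Lay i r, [Gam i (Suc r), Gam i r]) :: _ \<Rightarrow> 'k)"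
  by (rule is_relation_ebasis) (use assms in \<open>auto simp: is_path_Cons plen_def\<close>)

lemma is_relation_comm:
  assumes \<alpha>: "\<alpha> \<in> arrs Q" and r: "r \<le> m"
  shows "is_relation Qh (\<lambda>z. ebasis (Lay (src Q \<alpha>) r, [ACopy \<alpha> (Suc r), Gam (src Q \<alpha>) r]) z
              - ebasis (Lay (src Q \<alpha>) r, [Gam (tgt Q \<alpha>) r, ACopy \<alpha> r]) z :: 'k)"
proof -
  let ?u1 = "(Lay (src Q \<alpha>) r, [ACopy \<alpha> (Suc r), Gam (src Q \<alpha>) r])"
  let ?u2 = "(Lay (src Q \<alpha>) r, [Gam (tgt Q \<alpha>) r, ACopy \<alpha> r])"
  have sv: "src Q \<alpha> \<in> verts Q" "tgt Q \<alpha> \<in> verts Q"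
    using bound_quiver_Q \<alpha> unfolding bound_quiver_def by auto
  have p1: "is_path Qh ?u1" "is_path Qh ?u2" using sv \<alpha> r by (auto simp: is_path_Cons)
  have sub: "{w. (ebasis ?u1 w - ebasis ?u2 w :: 'k) \<noteq> 0} \<subseteq> {?u1, ?u2}" by (auto simp: ebasis_def)
  have fin: "fin_supp (\<lambda>w. ebasis ?u1 w - ebasis ?u2 w :: 'k)" by (rule finite_subset[OF sub]) simp
  have A: "is_path Qh w \<and> 2 \<le> plen w" if "(ebasis ?u1 w - ebasis ?u2 w :: 'k) \<noteq> 0" for w
  proof -
    have "w = ?u1 \<or> w = ?u2" using sub that by blast
    then show ?thesis using p1 by (elim disjE) (simp_all add: plen_def)
  qed
  have B: "fst w = fst w' \<and> ptgt Qh w = ptgt Qh w' \<and> plen w = plen w'"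
    if "(ebasis ?u1 w - ebasis ?u2 w :: 'k) \<noteq> 0" "(ebasis ?u1 w' - ebasis ?u2 w' :: 'k) \<noteq> 0" for w w'
  proof -
    have "w = ?u1 \<or> w = ?u2" "w' = ?u1 \<or> w' = ?u2" using sub that by blast+
    then show ?thesis by (elim disjE) (simp_all add: plen_def)
  qed
  show ?thesis unfolding is_relation_def
    using fin A B by blast
qed

lemma bound_quiver_Qh: "bound_quiver Qh"
proof -
  have arr: "msrc Q \<alpha> \<in> verts Qh \<and> mtgt Q m \<alpha> \<in> verts Qh" if "\<alpha> \<in> arrs Qh" for \<alpha>
  proof (cases \<alpha>)
    case (BaseA x) then show ?thesis using that by simp
  next
    case (ACopy \<beta> r) then show ?thesis using that bound_quiver_Q unfolding bound_quiver_def by auto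
  next
    case (Gam i r) then show ?thesis using that by simp
  next
    case (Beta s as)
    then have sM: "(s, as) \<in> M" using that by simp
    have "is_path Q (s, as)" using M_path[OF sM] by simp
    then have "ptgt Q (s, as) \<in> verts Q" "s \<in> verts Q"
      using ptgt_in_verts[OF bound_quiver_Q] by (auto simp: is_path_def)
    then show ?thesis using Beta by simp
  qed
  have rel: "is_relation Qh \<rho>" if "\<rho> \<in> rels Qh" for \<rho>
    using that unfolding Qh_rels
  proof (elim UnE)
    assume "\<rho> \<in> {pushf (pcopy r) \<rho> | \<rho> r. \<rho> \<in> rels Q \<and> r \<le> Suc m}"
    then show ?thesis using is_relation_copy by blast
  next
    assume "\<rho> \<in> {ebasis (Lay i r, [Gam i (Suc r), Gam i r]) | i r. i \<in> verts Q \<and> r < m}"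
    then show ?thesis using is_relation_gam_gam by blast
  next
    assume "\<rho> \<in> {(\<lambda>z. ebasis (Lay (src Q \<alpha>) r, [ACopy \<alpha> (Suc r), Gam (src Q \<alpha>) r]) z
              - ebasis (Lay (src Q \<alpha>) r, [Gam (tgt Q \<alpha>) r, ACopy \<alpha> r]) z) | \<alpha> r. \<alpha> \<in> arrs Q \<and> r \<le> m}"
    then show ?thesis using is_relation_comm by blast
  next
    assume "\<rho> \<in> rho_M Q m M"
    then show ?thesis unfolding rho_M_def is_relation_ml by blast
  qed
  show ?thesis unfolding bound_quiver_def using arr rel by simp
qed

lemma fin_supp_rels_Qh: "fin_supp_rels Qh" by (rule bound_quiver_fin_supp_rels[OF bound_quiver_Qh])

lemma finite_bq_Qh: "finite_bq Qh"
proof -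
  have "verts Qh = (\<lambda>(i, r). Lay i r) ` (verts Q \<times> {..Suc m})" unfolding Qh_verts by force
  then have fv: "finite (verts Qh)" using fin unfolding finite_bq_def by simp
  have e1: "{ACopy \<alpha> r | \<alpha> r. \<alpha> \<in> arrs Q \<and> r \<le> Suc m} = (\<lambda>(\<alpha>, r). ACopy \<alpha> r) ` (arrs Q \<times> {..Suc m})"
    by force
  have e2: "{Gam i r | i r. i \<in> verts Q \<and> r \<le> m} = (\<lambda>(i, r). Gam i r) ` (verts Q \<times> {..m})"
    by force
  have e3: "{Beta (fst p) (snd p) | p. p \<in> M} = (\<lambda>p. Beta (fst p) (snd p)) ` M"
    by force
  have "arrs Qh = (\<lambda>(\<alpha>, r). ACopy \<alpha> r) ` (arrs Q \<times> {..Suc m}) \<union> (\<lambda>(i, r). Gam i r) ` (verts Q \<times> {..m})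
      \<union> (\<lambda>p. Beta (fst p) (snd p)) ` M" unfolding Qh_arrs e1 e2 e3 ..
  then have fa: "finite (arrs Qh)" using fin finite_M unfolding finite_bq_def by simp
  show ?thesis unfolding finite_bq_def using fv fa by simp
qed

lemma nicely_graded_Qh: "nicely_graded Qh"
proof -
  obtain u :: "_ \<Rightarrow> int" where u: "\<forall>\<alpha>\<in>arrs Q. u (tgt Q \<alpha>) = u (src Q \<alpha>) + 1"
    using nicely_graded_Q unfolding nicely_graded_def by blast
  define u' where "u' = (\<lambda>v. case v of Lay i r \<Rightarrow> u i + int r | BaseV _ \<Rightarrow> 0)"
  have "u' (mtgt Q m \<alpha>) = u' (msrc Q \<alpha>) + 1" if "\<alpha> \<in> arrs Qh" for \<alpha>
  proof (cases \<alpha>)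
    case (BaseA x) then show ?thesis using that by simp
  next
    case (ACopy \<beta> r) then show ?thesis using that u unfolding u'_def by auto
  next
    case (Gam i r) then show ?thesis unfolding u'_def by simp
  next
    case (Beta s as)
    then have sM: "(s, as) \<in> M" using that by simp
    have "is_path Q (s, as)" "length as = m" using M_path[OF sM] by (auto simp: plen_def)
    then have "u (ptgt Q (s, as)) = u s + int m" using grade_ptgt[OF u] by simp
    then show ?thesis using Beta unfolding u'_def by simp
  qed
  then show ?thesis unfolding nicely_graded_def using bound_quiver_Qh by auto
qed

lemma pushf_copy_mul3:
  assumes f\<rho>: "fin_supp \<rho>"
  shows "pushf (pcopy s) (mul3 Q x \<rho> y) = mul3 Qh (pcopy s x) (pushf (pcopy s) \<rho>) (pcopy s y)"
proof -
  define \<rho>1 where "\<rho>1 = (\<lambda>w. if fst w = ptgt Q y \<and> ptgt Q w = fst x then \<rho> w else 0)"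
  have f1: "fin_supp \<rho>1" unfolding \<rho>1_def by (rule fin_supp_restrict[OF f\<rho>])
  have "pushf (pcopy s) (mul3 Q x \<rho> y) = pushf (\<lambda>w. pcopy s (pcomp x (pcomp w y))) \<rho>1"
    unfolding mul3_eq_pushf \<rho>1_def[symmetric] by (rule pushf_comp[OF f1])
  also have "\<dots> = pushf (\<lambda>w. pcomp (pcopy s x) (pcomp (pcopy s w) (pcopy s y))) \<rho>1"
    by (simp add: pcopy_pcomp)
  also have "\<rho>1 = (\<lambda>w. if fst (pcopy s w) = ptgt Qh (pcopy s y)
      \<and> ptgt Qh (pcopy s w) = fst (pcopy s x) then \<rho> w else 0)"
    unfolding \<rho>1_def by (rule ext) (simp only: ptgt_pcopy, simp add: pcopy_lift)
  also have "pushf (\<lambda>w. pcomp (pcopy s x) (pcomp (pcopy s w) (pcopy s y))) \<dots>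
      = pushf (\<lambda>z. pcomp (pcopy s x) (pcomp z (pcopy s y)))
          (pushf (pcopy s) (\<lambda>w. if fst (pcopy s w) = ptgt Qh (pcopy s y) \<and> ptgt Qh (pcopy s w) = fst (pcopy s x) then \<rho> w else 0))"
    by (rule pushf_comp[symmetric]) (rule fin_supp_restrict[OF f\<rho>])
  also have "\<dots> = pushf (\<lambda>z. pcomp (pcopy s x) (pcomp z (pcopy s y)))
          (\<lambda>z. if fst z = ptgt Qh (pcopy s y) \<and> ptgt Qh z = fst (pcopy s x) then pushf (pcopy s) \<rho> z else 0)"
    by (subst pushf_restrict) simp
  also have "\<dots> = mul3 Qh (pcopy s x) (pushf (pcopy s) \<rho>) (pcopy s y)"
    by (rule mul3_eq_pushf[symmetric])
  finally show ?thesis .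
qed

lemma pushf_pcopy_ideal:
  assumes r: "r \<le> Suc m"
  shows "a \<in> ideal_of Q \<Longrightarrow> pushf (pcopy r) a \<in> ideal_of Qh"
proof (induction a rule: ideal_of.induct)
  case zero then show ?case by (simp add: pushf_zero ideal_of.zero)
next
  case (gen \<rho> x y)
  have f\<rho>: "fin_supp \<rho>" using gen fin_supp_rels_Q unfolding fin_supp_rels_def by blast
  have "pushf (pcopy r) \<rho> \<in> rels Qh" unfolding Qh_rels using gen r by blast
  moreover have "is_path Qh (pcopy r x)" "is_path Qh (pcopy r y)"
    using gen r is_path_pcopy[of "fst x" "snd x" r] is_path_pcopy[of "fst y" "snd y" r] by auto
  ultimately have "mul3 Qh (pcopy r x) (pushf (pcopy r) \<rho>) (pcopy r y) \<in> ideal_of Qh"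
    by (rule ideal_of.gen)
  then show ?case by (simp add: pushf_copy_mul3[OF f\<rho>])
next
  case (add a b)
  then show ?case using fin_supp_ideal[OF fin_supp_rels_Q] by (simp add: pushf_add ideal_of.add)
next
  case (smult a c)
  then show ?case using fin_supp_ideal[OF fin_supp_rels_Q] by (simp add: pushf_smult ideal_of.smult)
qed

lemma ebasis_pcopy_ideal:
  assumes "ebasis w \<in> ideal_of Q" "r \<le> Suc m"
  shows "ebasis (pcopy r w) \<in> ideal_of Qh"
  using pushf_pcopy_ideal[OF assms(2) assms(1)] by (simp add: pushf_ebasis)

lemma path_equiv_comm:
  assumes Y: "is_path Qh Y" "ptgt Qh Y = Lay (src Q \<alpha>) r" and \<alpha>: "\<alpha> \<in> arrs Q" and r: "r \<le> m"
  shows "path_equiv Qh (fst Y, ACopy \<alpha> (Suc r) # Gam (src Q \<alpha>) r # snd Y) (fst Y, Gam (tgt Q \<alpha>) r # ACopy \<alpha> r # snd Y)"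
proof -
  let ?u1 = "(Lay (src Q \<alpha>) r, [ACopy \<alpha> (Suc r), Gam (src Q \<alpha>) r])"
  let ?u2 = "(Lay (src Q \<alpha>) r, [Gam (tgt Q \<alpha>) r, ACopy \<alpha> r])"
  let ?\<rho> = "\<lambda>z. ebasis ?u1 z - ebasis ?u2 z :: 'k"
  let ?X = "(Lay (tgt Q \<alpha>) (Suc r), [])"
  have tv: "tgt Q \<alpha> \<in> verts Q" using bound_quiver_Q \<alpha> unfolding bound_quiver_def by auto
  have "?\<rho> \<in> rels Qh" unfolding Qh_rels using \<alpha> r by blast
  moreover have "is_path Qh ?X" using tv r by simp
  ultimately have "mul3 Qh ?X ?\<rho> Y \<in> ideal_of Qh" using Y(1) by (rule ideal_of.gen)
  moreover have "mul3 Qh ?X ?\<rho> Y = (\<lambda>z. ebasis (fst Y, ACopy \<alpha> (Suc r) # Gam (src Q \<alpha>) r # snd Y) z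
       - ebasis (fst Y, Gam (tgt Q \<alpha>) r # ACopy \<alpha> r # snd Y) z)"
    using Y by (simp add: mul3_diff fin_supp_ebasis mul3_ebasis pcomp_def)
  ultimately show ?thesis unfolding path_equiv_def by simp
qed

lemma ideal_gam_gam:
  assumes Y: "is_path Qh Y" "ptgt Qh Y = Lay k r" and k: "k \<in> verts Q" and r: "r < m"
  shows "ebasis (fst Y, Gam k (Suc r) # Gam k r # snd Y) \<in> ideal_of Qh"
proof -
  let ?u = "(Lay k r, [Gam k (Suc r), Gam k r])"
  let ?X = "(Lay k (Suc (Suc r)), [])"
  have "(ebasis ?u :: _ \<Rightarrow> 'k) \<in> rels Qh" unfolding Qh_rels using k r by blast
  moreover have "is_path Qh ?X" using k r by simp
  ultimately have "mul3 Qh ?X (ebasis ?u) Y \<in> ideal_of Qh" using Y(1) by (rule ideal_of.gen)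
  moreover have "mul3 Qh ?X (ebasis ?u) Y = ebasis (fst Y, Gam k (Suc r) # Gam k r # snd Y)"
    using Y by (simp add: mul3_ebasis pcomp_def)
  ultimately show ?thesis by simp
qed

text \<open>The commutativity relations move the arrow \<gamma> of a \<beta>-free path to its end; two arrows \<gamma>
  then meet in a relation \<open>\<gamma>\<gamma>\<close>.\<close>

lemma beta_free_path_gam_normal_form:
  "is_path Qh (Lay i r, L) \<Longrightarrow> n_beta L = 0 \<Longrightarrow>
    (n_gam L = 1 \<longrightarrow> path_equiv Qh (Lay i r, L) (Lay i r, Gam (ptgt Q (i, strip L)) r # lift r (strip L)))
    \<and> (2 \<le> n_gam L \<longrightarrow> ebasis (Lay i r, L) \<in> ideal_of Qh)"
proof (induction L)
  case Nil then show ?case by simp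
next
  case (Cons a L)
  have pL: "is_path Qh (Lay i r, L)" and aA: "a \<in> arrs Qh" and sa: "msrc Q a = ptgt Qh (Lay i r, L)"
    using Cons.prems(1) by (auto simp: is_path_Cons)
  have nbL: "n_beta L = 0" and "\<not> is_beta a" using Cons.prems(2) by (auto split: if_splits)
  define w where "w = strip L"
  define j where "j = ptgt Q (i, w)"
  have A: "is_path Q (i, w)" "ptgt Qh (Lay i r, L) = Lay j (r + n_gam L)" "n_gam L = 0 \<longrightarrow> L = lift r w"
    using beta_free_path[OF pL nbL] unfolding w_def j_def by auto
  have IH: "n_gam L = 1 \<longrightarrow> path_equiv Qh (Lay i r, L) (Lay i r, Gam j r # lift r w)"
     "2 \<le> n_gam L \<longrightarrow> ebasis (Lay i r, L) \<in> ideal_of Qh"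
    using Cons.IH[OF pL nbL] unfolding w_def j_def by auto
  have iv: "Lay i r \<in> verts Qh" using pL by (simp add: is_path_def)
  have sv: "src Qh a \<in> verts Qh" using aA bound_quiver_Qh unfolding bound_quiver_def by blast
  have jv: "j \<in> verts Q" unfolding j_def by (rule ptgt_in_verts[OF bound_quiver_Q A(1)])
  have Y: "is_path Qh (Lay i r, lift r w)" "ptgt Qh (Lay i r, lift r w) = Lay j r"
    using is_path_pcopy[OF A(1)] ptgt_pcopy[of r "(i, w)"] iv unfolding j_def by (auto simp: pcopy_lift)
  show ?case
  proof (cases "2 \<le> n_gam L")
    case True
    have "ebasis (Lay i r, a # L) \<in> ideal_of Qh"
      using ideal_prepend[OF fin_supp_rels_Qh, of "(Lay i r, L)" a] IH(2) True sa aA sv iv by simp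
    then show ?thesis using True by simp
  next
    case few: False
    consider (copy) \<alpha> s where "a = ACopy \<alpha> s" | (gam) k s where "a = Gam k s"
      using aA \<open>\<not> is_beta a\<close> by (cases a) auto
    then show ?thesis
    proof cases
      case copy
      have \<alpha>: "\<alpha> \<in> arrs Q" "s \<le> Suc m" and e: "src Q \<alpha> = j" "s = r + n_gam L"
        using aA sa A(2) copy by auto
      show ?thesis
      proof (cases "n_gam L = 1")
        case False
        then show ?thesis using copy few by simp
      next
        case True
        have "path_equiv Qh (Lay i r, a # L) (Lay i r, ACopy \<alpha> (Suc r) # Gam j r # lift r w)"
          using path_equiv_prepend[OF fin_supp_rels_Qh, of "(Lay i r, L)" "(Lay i r, Gam j r # lift r w)" a]
            IH(1) True copy e sa aA sv iv jv by simp
        also have "path_equiv Qh \<dots> (Lay i r, Gam (tgt Q \<alpha>) r # ACopy \<alpha> r # lift r w)"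
          using path_equiv_comm[OF Y(1) _ \<alpha>(1)] Y(2) \<alpha>(2) e True by simp
        finally show ?thesis using copy True unfolding w_def by simp
      qed
    next
      case gam
      have k: "k \<in> verts Q" "s \<le> m" and e: "k = j" "s = r + n_gam L"
        using aA sa A(2) gam by auto
      show ?thesis
      proof (cases "n_gam L = 1")
        case False
        then have ng0: "n_gam L = 0" using few by simp
        then have "L = lift r w" "a = Gam j r" using A(3) e gam by auto
        then show ?thesis using ng0 path_equiv_refl unfolding w_def j_def by simp
      next
        case True
        have "path_equiv Qh (Lay i r, a # L) (Lay i r, Gam j (Suc r) # Gam j r # lift r w)"
          using path_equiv_prepend[OF fin_supp_rels_Qh, of "(Lay i r, L)" "(Lay i r, Gam j r # lift r w)" a]
            IH(1) True gam e sa aA sv iv jv by simp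
        moreover have "ebasis (Lay i r, Gam j (Suc r) # Gam j r # lift r w) \<in> ideal_of Qh"
          using ideal_gam_gam[OF Y jv] k e True by simp
        ultimately have "ebasis (Lay i r, a # L) \<in> ideal_of Qh" by (rule path_equiv_ideal)
        then show ?thesis using gam True by simp
      qed
    qed
  qed
qed

end

section \<open>Functionals vanishing on the ideal of the multi-layer quiver\<close>

text \<open>Bound paths of the multi-layer quiver are detected by functionals that vanish on its ideal.
  \<open>gam_functional g s \<theta>\<close> evaluates a functional \<theta> on \<open>\<Lambda>\<close> at the image in \<open>Q\<close> of a \<beta>-free path
  with \<open>g\<close> arrows \<gamma> starting on floor \<open>s\<close>; \<open>beta_functional z\<close> sends the path
  \<open>x\<^sup>[\<^sup>m\<^sup>+\<^sup>1\<^sup>] \<beta>\<^sub>p y\<^sup>[\<^sup>0\<^sup>]\<close> to \<open>(x p\<^sup>* y)(z)\<close>, the value by which \<open>\<rho>\<^sub>M\<close> is defined.\<close>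

definition gam_functional :: "nat \<Rightarrow> nat \<Rightarrow> ('v vert \<times> ('v,'a) arr list \<Rightarrow> 'k::field)
    \<Rightarrow> 'v vert \<times> ('v,'a) arr list \<Rightarrow> 'k" where
  "gam_functional g s \<theta> P = (if n_beta (snd P) = 0 \<and> n_gam (snd P) = g \<and> layer (fst P) = s
     then \<theta> (base_vert (fst P), strip (snd P)) else 0)"

definition beta_functional :: "('v,'a,'k::field) uquiver \<Rightarrow> nat \<Rightarrow> ('v vert \<times> ('v,'a) arr list) set
    \<Rightarrow> 'v vert \<times> ('v,'a) arr list \<Rightarrow> 'v vert \<times> ('v,'a) arr list \<Rightarrow> 'k" where
  "beta_functional Q m M z P = (if n_beta (snd P) = 1 \<and> n_gam (snd P) = 0 then
     (case split_beta (snd P) of (X, s, as, Y) \<Rightarrow> dual_act Q m M (s, X) (s, as) (base_vert (fst P), Y) z)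
   else 0)"

lemma gam_functional_pcomp: "gam_functional g s \<theta> (pcomp (vX, LX) (pcomp (v, W) (vY, LY))) =
   (if n_beta LX + n_beta W + n_beta LY = 0 \<and> n_gam LX + n_gam W + n_gam LY = g \<and> layer vY = s
    then \<theta> (base_vert vY, strip LX @ strip W @ strip LY) else 0)"
  by (simp add: gam_functional_def pcomp_def)

lemma beta_functional_lift: "beta_functional Q m M z (v, lift a X @ Beta s as # lift b Y)
    = dual_act Q m M (s, X) (s, as) (base_vert v, Y) z"
  by (simp add: beta_functional_def split_beta_lift)

lemma beta_functional_eq_0: "\<not> (n_beta L = 1 \<and> n_gam L = 0) \<Longrightarrow> beta_functional Q m M z (v, L) = 0"
  by (auto simp: beta_functional_def)

context multilayer_context
begin

lemma pairing_Qh_ideal_eq_0: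
  assumes copy: "\<And>\<rho>0 t X Y. \<rho>0 \<in> rels Q \<Longrightarrow> t \<le> Suc m \<Longrightarrow> is_path Qh X \<Longrightarrow> is_path Qh Y \<Longrightarrow>
      pairing \<psi> (mul3 Qh X (pushf (pcopy t) \<rho>0) Y) = 0"
    and gg: "\<And>i t X Y. i \<in> verts Q \<Longrightarrow> t < m \<Longrightarrow> is_path Qh X \<Longrightarrow> is_path Qh Y \<Longrightarrow>
      pairing \<psi> (mul3 Qh X (ebasis (Lay i t, [Gam i (Suc t), Gam i t])) Y) = 0"
    and comm: "\<And>\<alpha> t X Y. \<alpha> \<in> arrs Q \<Longrightarrow> t \<le> m \<Longrightarrow> is_path Qh X \<Longrightarrow> is_path Qh Y \<Longrightarrow>
      pairing \<psi> (mul3 Qh X (\<lambda>z. ebasis (Lay (src Q \<alpha>) t, [ACopy \<alpha> (Suc t), Gam (src Q \<alpha>) t]) z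
              - ebasis (Lay (src Q \<alpha>) t, [Gam (tgt Q \<alpha>) t, ACopy \<alpha> t]) z) Y) = 0"
    and rhoM: "\<And>\<rho> X Y. \<rho> \<in> rho_M Q m M \<Longrightarrow> is_path Qh X \<Longrightarrow> is_path Qh Y \<Longrightarrow>
      pairing \<psi> (mul3 Qh X \<rho> Y) = 0"
  shows "a \<in> ideal_of Qh \<Longrightarrow> pairing \<psi> a = 0"
proof (rule pairing_ideal_eq_0[OF fin_supp_rels_Qh])
  fix r X Y assume r: "r \<in> rels Qh" and X: "is_path Qh X" and Y: "is_path Qh Y"
  from r show "pairing \<psi> (mul3 Qh X r Y) = 0" unfolding Qh_rels
  proof (elim UnE)
    assume "r \<in> {pushf (pcopy t) \<rho> | \<rho> t. \<rho> \<in> rels Q \<and> t \<le> Suc m}"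
    then show ?thesis using copy X Y by blast
  next
    assume "r \<in> {ebasis (Lay i t, [Gam i (Suc t), Gam i t]) | i t. i \<in> verts Q \<and> t < m}"
    then show ?thesis using gg X Y by blast
  next
    assume "r \<in> {(\<lambda>z. ebasis (Lay (src Q \<alpha>) t, [ACopy \<alpha> (Suc t), Gam (src Q \<alpha>) t]) z
              - ebasis (Lay (src Q \<alpha>) t, [Gam (tgt Q \<alpha>) t, ACopy \<alpha> t]) z) | \<alpha> t. \<alpha> \<in> arrs Q \<and> t \<le> m}"
    then show ?thesis using comm X Y by blast
  next
    assume "r \<in> rho_M Q m M"
    then show ?thesis using rhoM X Y by blast
  qed
qed

lemma pairing_mul3_copy:
  assumes "fin_supp \<rho>0"
  shows "pairing \<psi> (mul3 Qh X (pushf (pcopy t) \<rho>0) Y) =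
    pairing (\<lambda>w0. if fst (pcopy t w0) = ptgt Qh Y \<and> ptgt Qh (pcopy t w0) = fst X then \<psi> (pcomp X (pcomp (pcopy t w0) Y)) else 0) \<rho>0"
  using assms by (simp add: pairing_mul3 fin_supp_pushf pairing_pushf)

lemma pairing_mul3_ebasis:
  "pairing \<psi> (mul3 Qh X (ebasis u) Y) = (if fst u = ptgt Qh Y \<and> ptgt Qh u = fst X
      then \<psi> (pcomp X (pcomp u Y)) else (0::'k))"
  by (simp add: pairing_mul3 fin_supp_ebasis pairing_ebasis)

lemma pairing_mul3_diff:
  assumes "u1 \<noteq> u2" "fst u1 = fst u2" "ptgt Qh u1 = ptgt Qh u2"
  shows "pairing \<psi> (mul3 Qh X (\<lambda>z. ebasis u1 z - ebasis u2 z) Y) =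
    (if fst u1 = ptgt Qh Y \<and> ptgt Qh u1 = fst X then \<psi> (pcomp X (pcomp u1 Y)) - \<psi> (pcomp X (pcomp u2 Y)) else (0::'k))"
proof -
  have f: "fin_supp (\<lambda>z. ebasis u1 z - ebasis u2 z :: 'k)"
    by (rule finite_subset[of _ "{u1, u2}"]) (auto simp: ebasis_def)
  show ?thesis using assms by (simp add: pairing_mul3[OF f] pairing_diff_ebasis)
qed

lemma pairing_mul3_copy_eq:
  assumes \<rho>0: "\<rho>0 \<in> rels Q"
    and val: "\<And>w0. (if fst (pcopy t w0) = ptgt Qh Y \<and> ptgt Qh (pcopy t w0) = fst X
                    then \<psi> (pcomp X (pcomp (pcopy t w0) Y)) else 0)
                 = (if fst w0 = ptgt Q B \<and> ptgt Q w0 = fst A then \<chi> (pcomp A (pcomp w0 B)) else 0)"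
  shows "pairing \<psi> (mul3 Qh X (pushf (pcopy t) \<rho>0) Y) = pairing \<chi> (mul3 Q A \<rho>0 B)"
proof -
  have "fin_supp \<rho>0" using \<rho>0 fin_supp_rels_Q unfolding fin_supp_rels_def by blast
  then show ?thesis by (simp only: pairing_mul3_copy pairing_mul3 val)
qed

lemma pairing_mul3_copy_eq_0:
  assumes \<rho>0: "\<rho>0 \<in> rels Q"
    and val: "\<And>w0. (if fst (pcopy t w0) = ptgt Qh Y \<and> ptgt Qh (pcopy t w0) = fst X
                    then \<psi> (pcomp X (pcomp (pcopy t w0) Y)) else 0) = 0"
  shows "pairing \<psi> (mul3 Qh X (pushf (pcopy t) \<rho>0) Y) = 0"
proof -
  have "fin_supp \<rho>0" using \<rho>0 fin_supp_rels_Q unfolding fin_supp_rels_def by blast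
  then show ?thesis by (simp only: pairing_mul3_copy val pairing_zero_fun)
qed

lemma pairing_gam_functional_copy:
  assumes \<theta>: "\<forall>a\<in>ideal_of Q. pairing \<theta> a = 0" and \<rho>0: "\<rho>0 \<in> rels Q"
    and X: "is_path Qh X" and Y: "is_path Qh Y"
  shows "pairing (gam_functional g s \<theta>) (mul3 Qh X (pushf (pcopy t) \<rho>0) Y) = 0"
proof -
  obtain iX rX LX where Xe: "X = (Lay iX rX, LX)" and pX: "is_path Qh (Lay iX rX, LX)"
    using path_Qh_cases[OF X] .
  obtain iY rY LY where Ye: "Y = (Lay iY rY, LY)" and pY: "is_path Qh (Lay iY rY, LY)"
    using path_Qh_cases[OF Y] .
  show ?thesis
  proof (cases "n_beta LX = 0 \<and> n_beta LY = 0 \<and> n_gam LX + n_gam LY = g \<and> rY = s")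
    case False
    then show ?thesis
      by (intro pairing_mul3_copy_eq_0[OF \<rho>0]) (auto simp: Xe Ye pcopy_lift gam_functional_pcomp)
  next
    case shape: True
    define X0 where "X0 = (iX, strip LX)"
    define Y0 where "Y0 = (iY, strip LY)"
    have AX: "is_path Q X0" using beta_free_path[OF pX] shape unfolding X0_def by auto
    have AY: "is_path Q Y0" "ptgt Qh Y = Lay (ptgt Q Y0) (rY + n_gam LY)"
      using beta_free_path[OF pY] shape unfolding Ye Y0_def by auto
    show ?thesis
    proof (cases "t = rY + n_gam LY \<and> t = rX")
      case False
      then show ?thesis
        by (intro pairing_mul3_copy_eq_0[OF \<rho>0]) (auto simp: AY(2) Xe pcopy_lift ptgt_lift)
    next
      case True
      have "pairing (gam_functional g s \<theta>) (mul3 Qh X (pushf (pcopy t) \<rho>0) Y)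
          = pairing \<theta> (mul3 Q X0 \<rho>0 Y0)"
      proof (rule pairing_mul3_copy_eq[OF \<rho>0])
        fix w0
        show "(if fst (pcopy t w0) = ptgt Qh Y \<and> ptgt Qh (pcopy t w0) = fst X
              then gam_functional g s \<theta> (pcomp X (pcomp (pcopy t w0) Y)) else 0)
            = (if fst w0 = ptgt Q Y0 \<and> ptgt Q w0 = fst X0 then \<theta> (pcomp X0 (pcomp w0 Y0)) else 0)"
          using shape True AY(2) unfolding Xe Ye X0_def Y0_def
          by (simp add: ptgt_pcopy) (auto simp: pcopy_lift gam_functional_def pcomp_def)
      qed
      also have "\<dots> = 0" using \<theta> ideal_of.gen[OF \<rho>0 AX AY(1)] by blast
      finally show ?thesis .
    qed
  qed
qed

lemma pairing_gam_functional_ideal: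
  assumes \<theta>: "\<forall>a\<in>ideal_of Q. pairing \<theta> a = 0" and g: "g \<le> 1"
  shows "a \<in> ideal_of Qh \<Longrightarrow> pairing (gam_functional g s \<theta>) a = 0"
proof (rule pairing_Qh_ideal_eq_0)
  fix \<rho>0 t X Y assume "\<rho>0 \<in> rels Q" "is_path Qh X" "is_path Qh Y"
  then show "pairing (gam_functional g s \<theta>) (mul3 Qh X (pushf (pcopy t) \<rho>0) Y) = 0"
    by (rule pairing_gam_functional_copy[OF \<theta>])
next
  fix i t X Y
  show "pairing (gam_functional g s \<theta>) (mul3 Qh X (ebasis (Lay i t, [Gam i (Suc t), Gam i t])) Y)
      = 0"
    using g by (cases X, cases Y) (simp add: pairing_mul3_ebasis gam_functional_pcomp)
next
  fix \<alpha> t X Y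
  show "pairing (gam_functional g s \<theta>) (mul3 Qh X (\<lambda>z. ebasis (Lay (src Q \<alpha>) t, [ACopy \<alpha> (Suc t), Gam (src Q \<alpha>) t]) z
              - ebasis (Lay (src Q \<alpha>) t, [Gam (tgt Q \<alpha>) t, ACopy \<alpha> t]) z) Y) = 0"
    by (cases X, cases Y) (simp add: pairing_mul3_diff gam_functional_pcomp)
next
  fix \<rho> X Y assume \<rho>: "\<rho> \<in> rho_M Q m M"
  from \<rho> obtain S c where S: "finite S" and \<rho>e: "\<rho> = (\<lambda>z. \<Sum>t\<in>S. c t * ebasis (bpath m t) z)"
    unfolding rho_M_def by blast
  have f: "fin_supp \<rho>" using \<rho> unfolding rho_M_def is_relation_def by blast
  have "pairing (gam_functional g s \<theta>) (mul3 Qh X \<rho> Y) = (\<Sum>t\<in>S. c t *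
      (if fst (bpath m t) = ptgt Qh Y \<and> ptgt Qh (bpath m t) = fst X
       then gam_functional g s \<theta> (pcomp X (pcomp (bpath m t) Y)) else 0))"
    unfolding pairing_mul3[OF f] unfolding \<rho>e by (rule pairing_sum_ebasis[OF S])
  also have "\<dots> = 0"
    by (rule sum.neutral) (auto simp: bpath_def gam_functional_def pcomp_def split: prod.splits)
  finally show "pairing (gam_functional g s \<theta>) (mul3 Qh X \<rho> Y) = 0" .
qed

lemma ptgt_bpath: "fst x = fst p \<Longrightarrow> ptgt Qh (bpath m (x, p, y)) = Lay (ptgt Q x) (Suc m)"
  by (cases x; cases "snd x") (auto simp: bpath_lift ptgt_def lift_def)

lemma fst_bpath: "fst (bpath m (x, p, y)) = Lay (fst y) 0" by (simp add: bpath_lift)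

lemma pairing_beta_functional_copy_right:
  assumes z: "is_path Q z" and \<rho>0: "\<rho>0 \<in> rels Q"
    and pX: "is_path Qh (Lay iX rX, LX)" "n_beta LX = 0" "n_gam LX = 0"
    and pY: "is_path Qh (Lay iY rY, LY)" "n_beta LY = 1"
  shows "pairing (beta_functional Q m M z) (mul3 Qh (Lay iX rX, LX) (pushf (pcopy t) \<rho>0) (Lay iY rY, LY)) = 0"
proof -
  obtain y1 s as y2 where B: "LY = lift (Suc m) y1 @ Beta s as # lift 0 y2" "rY = 0"
      "is_path Q (iY, y2)" "is_path Q (s, y1)" "ptgt Qh (Lay iY rY, LY) = Lay (ptgt Q (s, y1)) (Suc m)"
    using beta_path_decomp[OF pY(1)] pY(2) by auto
  define xs where "xs = strip LX"
  have A: "is_path Q (iX, xs)" "LX = lift rX xs"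
    using beta_free_path[OF pX(1,2)] pX(3) unfolding xs_def by auto
  define K where "K \<longleftrightarrow> t = Suc m \<and> rX = Suc m \<and> ptgt Q (iX, xs) = fst z \<and> ptgt Q z = iY"
  define Ap where "Ap = pcomp (iY, y2) (pcomp z (iX, xs))"
  have val: "(if fst (pcopy t w0) = ptgt Qh (Lay iY rY, LY) \<and> ptgt Qh (pcopy t w0) = Lay iX rX
        then beta_functional Q m M z (pcomp (Lay iX rX, LX) (pcomp (pcopy t w0) (Lay iY rY, LY))) else 0)
      = (if fst w0 = ptgt Q (s, y1) \<and> ptgt Q w0 = fst Ap
         then (if K then dualf Q m M (s, as) (pcomp Ap (pcomp w0 (s, y1))) else 0) else 0)" for w0
  proof (cases w0)
    case (Pair v0 W0)
    show ?thesis
    proof (cases "v0 = ptgt Q (s, y1) \<and> ptgt Q (v0, W0) = iX \<and> t = Suc m \<and> rX = Suc m")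
      case False
      then show ?thesis using B(5) Pair unfolding K_def Ap_def by (auto simp: pcopy_lift ptgt_lift pcomp_def)
    next
      case True
      have l: "LX @ lift t W0 @ LY = lift (Suc m) (xs @ W0 @ y1) @ Beta s as # lift 0 y2"
        using True A(2) B(1) by simp
      have "ptgt Q (s, xs @ W0 @ y1) = ptgt Q (iX, xs)" using True by (auto simp: ptgt_append)
      then show ?thesis unfolding Pair pcomp_pcopy l beta_functional_lift
        using True B(2,5) unfolding K_def Ap_def by (auto simp: pcopy_lift ptgt_lift pcomp_def dual_act_def)
    qed
  qed
  show ?thesis
  proof (cases K)
    case False
    then show ?thesis by (intro pairing_mul3_copy_eq_0[OF \<rho>0]) (simp only: val fst_conv, simp)
  next
    case True
    have Ap: "is_path Q Ap" using A(1) B(3) z True unfolding Ap_def K_def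
      by (intro is_path_pcomp) (auto simp: ptgt_pcomp)
    have "pairing (beta_functional Q m M z) (mul3 Qh (Lay iX rX, LX) (pushf (pcopy t) \<rho>0) (Lay iY rY, LY))
        = pairing (dualf Q m M (s, as)) (mul3 Q Ap \<rho>0 (s, y1))"
      by (rule pairing_mul3_copy_eq[OF \<rho>0]) (simp only: val True if_True fst_conv)
    also have "\<dots> = 0"
      using pairing_dualf_ideal[OF mb bound_quiver_Q] ideal_of.gen[OF \<rho>0 Ap B(4)] by blast
    finally show ?thesis .
  qed
qed

lemma pairing_beta_functional_copy_left:
  assumes z: "is_path Q z" and \<rho>0: "\<rho>0 \<in> rels Q"
    and pX: "is_path Qh (Lay iX rX, LX)" "n_beta LX = 1"
    and pY: "is_path Qh (Lay iY rY, LY)" "n_beta LY = 0" "n_gam LY = 0"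
  shows "pairing (beta_functional Q m M z) (mul3 Qh (Lay iX rX, LX) (pushf (pcopy t) \<rho>0) (Lay iY rY, LY)) = 0"
proof -
  obtain x1 s as x2 where B: "LX = lift (Suc m) x1 @ Beta s as # lift 0 x2" "rX = 0"
      "is_path Q (iX, x2)" "is_path Q (s, x1)"
    using beta_path_decomp[OF pX(1)] pX(2) by auto
  define ys where "ys = strip LY"
  have A: "is_path Q (iY, ys)" "ptgt Qh (Lay iY rY, LY) = Lay (ptgt Q (iY, ys)) rY" "LY = lift rY ys"
    using beta_free_path[OF pY(1,2)] pY(3) unfolding ys_def by auto
  define K where "K \<longleftrightarrow> t = 0 \<and> rY = 0 \<and> ptgt Q (s, x1) = fst z \<and> ptgt Q z = iY"
  define Bp where "Bp = pcomp (iY, ys) (pcomp z (s, x1))"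
  have pBp: "ptgt Q Bp = ptgt Q (iY, ys)" if K
    using that unfolding Bp_def K_def by (simp add: ptgt_append pcomp_def)
  have val: "(if fst (pcopy t w0) = ptgt Qh (Lay iY rY, LY) \<and> ptgt Qh (pcopy t w0) = Lay iX rX
        then beta_functional Q m M z (pcomp (Lay iX rX, LX) (pcomp (pcopy t w0) (Lay iY rY, LY))) else 0)
      = (if fst w0 = ptgt Q Bp \<and> ptgt Q w0 = iX
         then (if K then dualf Q m M (s, as) (pcomp (iX, x2) (pcomp w0 Bp)) else 0) else 0)" for w0
  proof (cases w0)
    case (Pair v0 W0)
    show ?thesis
    proof (cases "v0 = ptgt Q (iY, ys) \<and> ptgt Q (v0, W0) = iX \<and> t = 0 \<and> rY = 0")
      case False
      then show ?thesis using A(2) B(2) pBp Pair unfolding K_def by (auto simp: pcopy_lift ptgt_lift)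
    next
      case True
      then have l: "LX @ lift t W0 @ LY = lift (Suc m) x1 @ Beta s as # lift 0 (x2 @ W0 @ ys)"
        using A(3) B(1) by simp
      show ?thesis unfolding Pair pcomp_pcopy l beta_functional_lift
        using True A(2) B(2) pBp unfolding K_def Bp_def by (auto simp: pcopy_lift ptgt_lift pcomp_def dual_act_def)
    qed
  qed
  show ?thesis
  proof (cases K)
    case False
    then show ?thesis by (intro pairing_mul3_copy_eq_0[OF \<rho>0]) (simp only: val fst_conv, simp)
  next
    case True
    have Bp: "is_path Q Bp" using A(1) B(4) z True unfolding Bp_def K_def
      by (intro is_path_pcomp) (auto simp: ptgt_pcomp)
    have "pairing (beta_functional Q m M z) (mul3 Qh (Lay iX rX, LX) (pushf (pcopy t) \<rho>0) (Lay iY rY, LY))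
        = pairing (dualf Q m M (s, as)) (mul3 Q (iX, x2) \<rho>0 Bp)"
      by (rule pairing_mul3_copy_eq[OF \<rho>0]) (simp only: val True if_True fst_conv)
    also have "\<dots> = 0"
      using pairing_dualf_ideal[OF mb bound_quiver_Q] ideal_of.gen[OF \<rho>0 B(3) Bp] by blast
    finally show ?thesis .
  qed
qed

lemma pairing_beta_functional_copy:
  assumes z: "is_path Q z" and \<rho>0: "\<rho>0 \<in> rels Q" and X: "is_path Qh X" and Y: "is_path Qh Y"
  shows "pairing (beta_functional Q m M z) (mul3 Qh X (pushf (pcopy t) \<rho>0) Y) = 0"
proof -
  obtain iX rX LX where Xe: "X = (Lay iX rX, LX)" and pX: "is_path Qh (Lay iX rX, LX)"
    using path_Qh_cases[OF X] .
  obtain iY rY LY where Ye: "Y = (Lay iY rY, LY)" and pY: "is_path Qh (Lay iY rY, LY)"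
    using path_Qh_cases[OF Y] .
  consider "\<not> (n_beta LX + n_beta LY = 1 \<and> n_gam LX + n_gam LY = 0)"
    | "n_beta LX = 0" "n_gam LX = 0" "n_beta LY = 1" | "n_beta LX = 1" "n_beta LY = 0" "n_gam LY = 0"
    by linarith
  then show ?thesis
  proof cases
    case 1
    then show ?thesis unfolding Xe Ye
      by (intro pairing_mul3_copy_eq_0[OF \<rho>0]) (simp add: pcopy_lift pcomp_def beta_functional_eq_0)
  next
    case 2
    then show ?thesis unfolding Xe Ye by (rule pairing_beta_functional_copy_right[OF z \<rho>0 pX _ _ pY])
  next
    case 3
    then show ?thesis unfolding Xe Ye by (rule pairing_beta_functional_copy_left[OF z \<rho>0 pX _ pY])
  qed
qed

lemma beta_functional_bpath:
  assumes fx: "fst x = fst p"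
    and pX: "is_path Qh (Lay iX rX, LX)" and pY: "is_path Qh (Lay iY rY, LY)"
  defines "X0 \<equiv> (iX, strip LX)" and "Y0 \<equiv> (iY, strip LY)"
  shows "(if fst (bpath m (x, p, y)) = ptgt Qh (Lay iY rY, LY) \<and> ptgt Qh (bpath m (x, p, y)) = Lay iX rX
          then beta_functional Q m M z (pcomp (Lay iX rX, LX) (pcomp (bpath m (x, p, y)) (Lay iY rY, LY)))
          else 0)
    = (if n_beta LX = 0 \<and> n_beta LY = 0 \<and> n_gam LX = 0 \<and> n_gam LY = 0
          \<and> rX = Suc m \<and> rY = 0 \<and> ptgt Q X0 = fst z \<and> ptgt Q z = iY
       then dual_act Q m M x p y (pcomp Y0 (pcomp z X0)) else 0)"
proof -
  have ptZ: "fst (pcomp Y0 (pcomp z X0)) = iX" "ptgt Q (pcomp Y0 (pcomp z X0)) = ptgt Q Y0"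
    if "ptgt Q X0 = fst z" "ptgt Q z = iY"
    using that unfolding X0_def Y0_def by (simp_all add: ptgt_append pcomp_def)
  have comp: "pcomp (Lay iX rX, LX) (pcomp (bpath m (x, p, y)) (Lay iY rY, LY))
      = (Lay iY rY, LX @ (lift (Suc m) (snd x) @ Beta (fst p) (snd p) # lift 0 (snd y)) @ LY)"
    by (simp add: pcomp_def bpath_lift)
  show ?thesis
  proof (cases "n_beta LX = 0 \<and> n_beta LY = 0 \<and> n_gam LX = 0 \<and> n_gam LY = 0")
    case False
    then show ?thesis unfolding comp by (auto simp: beta_functional_eq_0)
  next
    case free: True
    have AX: "LX = lift rX (snd X0)"
      using beta_free_path[OF pX] free unfolding X0_def by auto
    have AY: "ptgt Qh (Lay iY rY, LY) = Lay (ptgt Q Y0) rY" "LY = lift rY (snd Y0)"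
      using beta_free_path[OF pY] free unfolding Y0_def by auto
    have guard: "fst (bpath m (x, p, y)) = ptgt Qh (Lay iY rY, LY) \<and> ptgt Qh (bpath m (x, p, y)) = Lay iX rX
        \<longleftrightarrow> fst y = ptgt Q Y0 \<and> rY = 0 \<and> ptgt Q x = iX \<and> rX = Suc m"
      using AY(1) ptgt_bpath[OF fx, of y] fst_bpath[of x p y] by auto
    show ?thesis
    proof (cases "fst y = ptgt Q Y0 \<and> rY = 0 \<and> ptgt Q x = iX \<and> rX = Suc m")
      case False
      then show ?thesis using ptZ unfolding guard dual_act_def by auto
    next
      case True
      have l: "LX @ (lift (Suc m) (snd x) @ Beta (fst p) (snd p) # lift 0 (snd y)) @ LY
          = lift (Suc m) (snd X0 @ snd x) @ Beta (fst p) (snd p) # lift 0 (snd y @ snd Y0)"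
        using AX AY(2) True by simp
      have "beta_functional Q m M z (pcomp (Lay iX rX, LX) (pcomp (bpath m (x, p, y)) (Lay iY rY, LY)))
          = dual_act Q m M (pcomp X0 x) p (pcomp y Y0) z"
        unfolding comp l beta_functional_lift by (simp add: pcomp_def fx X0_def Y0_def)
      also have "\<dots> = (if ptgt Q X0 = fst z \<and> ptgt Q z = iY
          then dual_act Q m M x p y (pcomp Y0 (pcomp z X0)) else 0)"
        using True unfolding X0_def Y0_def
        by (auto simp: dual_act_pcomp) (auto simp: dual_act_def ptgt_append pcomp_def)
      finally show ?thesis using free True unfolding guard by simp
    qed
  qed
qed

lemma pairing_beta_functional_rho_M:
  assumes z: "is_path Q z" and \<rho>: "\<rho> \<in> rho_M Q m M" and X: "is_path Qh X" and Y: "is_path Qh Y"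
  shows "pairing (beta_functional Q m M z) (mul3 Qh X \<rho> Y) = 0"
proof -
  from \<rho> obtain S c where rel: "is_relation (ml_base Q m M) \<rho>" and S: "finite S"
    and conds: "\<forall>(x, p, y)\<in>S. is_path Q x \<and> p \<in> M \<and> is_path Q y
        \<and> fst x = fst p \<and> ptgt Q y = ptgt Q p"
    and \<rho>e: "\<rho> = (\<lambda>z. \<Sum>t\<in>S. c t * ebasis (bpath m t) z)"
    and dualc: "\<forall>z. is_path Q z \<longrightarrow> (\<Sum>t\<in>S. c t * (case t of (x, p, y) \<Rightarrow> dual_act Q m M x p y z)) = 0"
    unfolding rho_M_def by blast
  have f: "fin_supp \<rho>" using rel unfolding is_relation_ml is_relation_def by blast
  obtain iX rX LX where Xe: "X = (Lay iX rX, LX)" and pX: "is_path Qh (Lay iX rX, LX)"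
    using path_Qh_cases[OF X] .
  obtain iY rY LY where Ye: "Y = (Lay iY rY, LY)" and pY: "is_path Qh (Lay iY rY, LY)"
    using path_Qh_cases[OF Y] .
  define Z where "Z = pcomp (iY, strip LY) (pcomp z (iX, strip LX))"
  define K where "K \<longleftrightarrow> n_beta LX = 0 \<and> n_beta LY = 0 \<and> n_gam LX = 0 \<and> n_gam LY = 0
    \<and> rX = Suc m \<and> rY = 0 \<and> ptgt Q (iX, strip LX) = fst z \<and> ptgt Q z = iY"
  have "pairing (beta_functional Q m M z) (mul3 Qh X \<rho> Y) = (\<Sum>t\<in>S. c t *
      (if fst (bpath m t) = ptgt Qh Y \<and> ptgt Qh (bpath m t) = fst X
       then beta_functional Q m M z (pcomp X (pcomp (bpath m t) Y)) else 0))"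
    unfolding pairing_mul3[OF f] unfolding \<rho>e by (rule pairing_sum_ebasis[OF S])
  also have "\<dots> = (\<Sum>t\<in>S. c t * (if K then (case t of (x, p, y) \<Rightarrow> dual_act Q m M x p y Z) else 0))"
  proof (intro sum.cong refl)
    fix t assume t: "t \<in> S"
    obtain x p y where txy: "t = (x, p, y)" by (cases t)
    then have "fst x = fst p" using conds t by auto
    from beta_functional_bpath[OF this pX pY, where y = y and z = z]
    show "c t * (if fst (bpath m t) = ptgt Qh Y \<and> ptgt Qh (bpath m t) = fst X
          then beta_functional Q m M z (pcomp X (pcomp (bpath m t) Y)) else 0)
        = c t * (if K then (case t of (x, p, y) \<Rightarrow> dual_act Q m M x p y Z) else 0)"
      unfolding txy Xe Ye K_def Z_def by (simp only: prod.case fst_conv)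
  qed
  also have "\<dots> = 0"
  proof (cases K)
    case True
    have "is_path Q Z" using beta_free_path[OF pX] beta_free_path[OF pY] z True
      unfolding Z_def K_def by (intro is_path_pcomp) (auto simp: ptgt_pcomp)
    then show ?thesis using dualc True by (simp del: split_paired_All)
  qed simp
  finally show ?thesis .
qed

lemma pairing_beta_functional_ideal:
  assumes z: "is_path Q z"
  shows "a \<in> ideal_of Qh \<Longrightarrow> pairing (beta_functional Q m M z) a = 0"
proof (rule pairing_Qh_ideal_eq_0)
  fix \<rho>0 t X Y assume "\<rho>0 \<in> rels Q" "is_path Qh X" "is_path Qh Y"
  then show "pairing (beta_functional Q m M z) (mul3 Qh X (pushf (pcopy t) \<rho>0) Y) = 0"
    by (rule pairing_beta_functional_copy[OF z])
next
  fix i t X Y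
  show "pairing (beta_functional Q m M z) (mul3 Qh X (ebasis (Lay i t, [Gam i (Suc t), Gam i t])) Y) = 0"
    by (cases X, cases Y) (simp add: pairing_mul3_ebasis beta_functional_def pcomp_def)
next
  fix \<alpha> t X Y
  show "pairing (beta_functional Q m M z) (mul3 Qh X (\<lambda>z. ebasis (Lay (src Q \<alpha>) t, [ACopy \<alpha> (Suc t), Gam (src Q \<alpha>) t]) z
              - ebasis (Lay (src Q \<alpha>) t, [Gam (tgt Q \<alpha>) t, ACopy \<alpha> t]) z) Y) = 0"
    by (cases X, cases Y) (simp add: pairing_mul3_diff beta_functional_def pcomp_def)
next
  fix \<rho> X Y assume "\<rho> \<in> rho_M Q m M" "is_path Qh X" "is_path Qh Y"
  then show "pairing (beta_functional Q m M z) (mul3 Qh X \<rho> Y) = 0"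
    by (rule pairing_beta_functional_rho_M[OF z])
qed

end

section \<open>Bound paths of the multi-layer quiver\<close>

context multilayer_context
begin

lemma path_start_verts: "is_path Qh (Lay i r, L) \<Longrightarrow> i \<in> verts Q \<and> r \<le> Suc m"
  by (simp add: is_path_def)

lemma bound_path_n_gam_le_1:
  assumes b: "bound_path Qh (Lay i r, L)" and nb0: "n_beta L = 0"
  shows "n_gam L \<le> 1"
proof (rule ccontr)
  assume "\<not> n_gam L \<le> 1"
  have P: "is_path Qh (Lay i r, L)" using b unfolding bound_path_def by blast
  then have "ebasis (Lay i r, L) \<in> ideal_of Qh"
    using beta_free_path_gam_normal_form[OF P nb0] \<open>\<not> n_gam L \<le> 1\<close> by simp
  then show False using b unfolding bound_path_def by simp
qed

lemma bound_path_strip: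
  assumes b: "bound_path Qh (Lay i r, L)" and nb0: "n_beta L = 0"
  shows "bound_path Q (i, strip L)"
proof -
  have P: "is_path Qh (Lay i r, L)" using b unfolding bound_path_def by blast
  define j where "j = ptgt Q (i, strip L)"
  have A: "is_path Q (i, strip L)" "ptgt Qh (Lay i r, L) = Lay j (r + n_gam L)"
      "n_gam L = 0 \<longrightarrow> L = lift r (strip L)"
    using beta_free_path[OF P nb0] unfolding j_def by auto
  have r: "r \<le> Suc m" using path_start_verts[OF P] by blast
  have "ebasis (Lay i r, L) \<in> ideal_of Qh" if I: "ebasis (i, strip L) \<in> ideal_of Q"
  proof (cases "n_gam L = 0")
    case True
    then show ?thesis using ebasis_pcopy_ideal[OF I r] A(3) by (simp add: pcopy_lift)
  next
    case False
    then have ng1: "n_gam L = 1" using bound_path_n_gam_le_1[OF b nb0] by simp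
    have jv: "j \<in> verts Q" unfolding j_def by (rule ptgt_in_verts[OF bound_quiver_Q A(1)])
    have "Lay j (Suc r) \<in> verts Qh" using A(2) ng1 ptgt_in_verts[OF bound_quiver_Qh P] by simp
    then have rm: "r \<le> m" by simp
    have "ebasis (Lay i r, lift r (strip L)) \<in> ideal_of Qh"
      using ebasis_pcopy_ideal[OF I] rm by (simp add: pcopy_lift)
    then have "ebasis (Lay i r, Gam j r # lift r (strip L)) \<in> ideal_of Qh"
      using ideal_prepend[OF fin_supp_rels_Qh, of "(Lay i r, lift r (strip L))" "Gam j r"] jv rm r
        path_start_verts[OF P] unfolding j_def by (simp add: ptgt_lift)
    moreover have "path_equiv Qh (Lay i r, L) (Lay i r, Gam j r # lift r (strip L))"
      using beta_free_path_gam_normal_form[OF P nb0] ng1 unfolding j_def by simp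
    ultimately show ?thesis using path_equiv_ideal by blast
  qed
  then show ?thesis using A(1) b unfolding bound_path_def by blast
qed

text \<open>If \<open>x p\<^sup>* y\<close> vanished, the path \<open>x\<^sup>[\<^sup>m\<^sup>+\<^sup>1\<^sup>] \<beta>\<^sub>p y\<^sup>[\<^sup>0\<^sup>]\<close> would itself be a relation in \<open>\<rho>\<^sub>M\<close>,
  unless it is the arrow \<open>\<beta>\<^sub>p\<close> alone, where \<open>p\<^sup>*(p) = 1\<close>.\<close>

lemma ex_dual_act_nonzero:
  assumes b: "bound_path Qh (Lay i 0, lift (Suc m) X @ Beta s as # lift 0 Y)"
    and sM: "(s, as) \<in> M" and pY: "is_path Q (i, Y)" and tY: "ptgt Q (i, Y) = ptgt Q (s, as)"
    and pX: "is_path Q (s, X)"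
  shows "\<exists>z. is_path Q z \<and> dual_act Q m M (s, X) (s, as) (i, Y) z \<noteq> 0"
proof (rule ccontr)
  assume nz: "\<not> (\<exists>z. is_path Q z \<and> dual_act Q m M (s, X) (s, as) (i, Y) z \<noteq> 0)"
  define P where "P = (Lay i 0, lift (Suc m) X @ Beta s as # lift 0 Y)"
  have PP: "is_path Qh P" using b unfolding bound_path_def P_def by blast
  show False
  proof (cases "X = [] \<and> Y = []")
    case True
    have "dual_act Q m M (s, X) (s, as) (i, Y) (s, as) = dualf Q m M (s, as) (s, as)"
      using True tY by (simp add: dual_act_def pcomp_def)
    also have "\<dots> = 1" using dualf_basis[OF mb sM] by simp
    finally show False using nz M_path[OF sM] by auto
  next
    case False
    have len: "2 \<le> plen P" using False unfolding P_def plen_def by (cases X; cases Y) auto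
    have "ebasis P \<in> rho_M Q m M"
      unfolding rho_M_def
    proof (intro CollectI conjI exI)
      show "is_relation (ml_base Q m M) (ebasis P)"
        unfolding is_relation_ml by (rule is_relation_ebasis[OF PP len])
      show "finite {((s, X), (s, as), (i, Y))}" by simp
      show "\<forall>(x, p, y)\<in>{((s, X), (s, as), (i, Y))}.
          is_path Q x \<and> p \<in> M \<and> is_path Q y \<and> fst x = fst p \<and> ptgt Q y = ptgt Q p"
        using pX sM pY tY by simp
      show "ebasis P = (\<lambda>z. \<Sum>t\<in>{((s, X), (s, as), (i, Y))}. (\<lambda>_. 1) t * ebasis (bpath m t) z)"
        unfolding P_def by (simp add: bpath_lift)
      show "\<forall>z. is_path Q z \<longrightarrow> (\<Sum>t\<in>{((s, X), (s, as), (i, Y))}.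
          (\<lambda>_. 1) t * (case t of (x, p, y) \<Rightarrow> dual_act Q m M x p y z)) = 0"
        using nz by simp
    qed
    then have "ebasis P \<in> rels Qh" unfolding Qh_rels by blast
    then have "ebasis P \<in> ideal_of Qh" by (rule ebasis_rel_ideal[OF bound_quiver_Qh PP])
    then show False using b unfolding bound_path_def P_def by simp
  qed
qed

lemma bound_beta_path_witness:
  assumes b: "bound_path Qh (Lay i r, L)" and nb: "n_beta L \<noteq> 0"
  obtains X s as Y z where "L = lift (Suc m) X @ Beta s as # lift 0 Y" "r = 0"
    "ptgt Qh (Lay i r, L) = Lay (ptgt Q (s, X)) (Suc m)"
    "is_path Q z" "ptgt Q (s, X) = fst z" "ptgt Q z = i"
    "dualf Q m M (s, as) (pcomp (i, Y) (pcomp z (s, X))) \<noteq> 0"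
    "length Y + length (snd z) + length X = m"
proof -
  have P: "is_path Qh (Lay i r, L)" using b unfolding bound_path_def by blast
  obtain X s as Y where B: "L = lift (Suc m) X @ Beta s as # lift 0 Y" "(s, as) \<in> M" "r = 0"
      "is_path Q (i, Y)" "ptgt Q (i, Y) = ptgt Q (s, as)" "is_path Q (s, X)"
      "ptgt Qh (Lay i r, L) = Lay (ptgt Q (s, X)) (Suc m)"
    using beta_path_decomp[OF P nb] by blast
  obtain z where z: "is_path Q z" "dual_act Q m M (s, X) (s, as) (i, Y) z \<noteq> 0"
    using ex_dual_act_nonzero[OF _ B(2,4,5,6)] b unfolding B(1,3) by blast
  then have zc: "ptgt Q (s, X) = fst z" "ptgt Q z = i"
    and D: "dualf Q m M (s, as) (pcomp (i, Y) (pcomp z (s, X))) \<noteq> 0"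
    by (auto simp: dual_act_def split: if_splits)
  have "plen (pcomp (i, Y) (pcomp z (s, X))) = m" using dualf_nonzero[OF D] by blast
  then have "length Y + length (snd z) + length X = m" by (simp add: plen_def pcomp_def)
  then show thesis by (rule that[OF B(1,3,7) z(1) zc D])
qed

lemma bound_path_length_le_Suc:
  assumes b: "bound_path Qh P"
  shows "plen P \<le> Suc m"
proof -
  obtain i r L where Pe: "P = (Lay i r, L)" and PP: "is_path Qh (Lay i r, L)"
    using b path_Qh_cases unfolding bound_path_def by blast
  have b': "bound_path Qh (Lay i r, L)" using b Pe by simp
  show ?thesis
  proof (cases "n_beta L = 0")
    case True
    have "length L = length (strip L) + n_gam L"
      using length_strip_counts[of L] PP True by (simp add: is_path_def)
    moreover have "n_gam L \<le> 1" by (rule bound_path_n_gam_le_1[OF b' True])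
    moreover have "length (strip L) \<le> m"
      using bound_path_length_le[OF fin ngd bound_path_strip[OF b' True]] by (simp add: plen_def)
    ultimately show ?thesis using Pe by (simp add: plen_def)
  next
    case False
    then show ?thesis by (rule bound_beta_path_witness[OF b']) (simp add: Pe plen_def)
  qed
qed

lemma not_maximal_bound_pathI:
  "\<alpha> \<in> arrs Qh \<Longrightarrow> (src Qh \<alpha> = ptgt Qh P \<and> bound_path Qh (fst P, \<alpha> # snd P)) \<or>
     (tgt Qh \<alpha> = fst P \<and> bound_path Qh (src Qh \<alpha>, snd P @ [\<alpha>])) \<Longrightarrow> \<not> maximal_bound_path Qh P"
  unfolding maximal_bound_path_def by blast

text \<open>A short bound path of \<open>Q\<close> extends by an arrow \<alpha>, and the copy of \<alpha> on the matching floor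
  extends the \<beta>-free path of \<open>Q\<^sup>^\<close>.\<close>

lemma not_maximal_extend_arrow:
  assumes PP: "is_path Qh (Lay i r, L)" and nb0: "n_beta L = 0" and g: "n_gam L \<le> 1"
    and bW: "bound_path Q (i, strip L)" and lt: "plen (i, strip L) < m"
  shows "\<not> maximal_bound_path Qh (Lay i r, L)"
proof -
  define w where "w = strip L"
  define j where "j = ptgt Q (i, w)"
  have pg: "properly_graded m Q" using ngd unfolding m_nicely_graded_def by blast
  have nm: "\<not> maximal_bound_path Q (i, w)" using pg lt unfolding properly_graded_def w_def by auto
  obtain \<alpha> where \<alpha>: "\<alpha> \<in> arrs Q" and alt: "(src Q \<alpha> = ptgt Q (i, w) \<and> bound_path Q (i, \<alpha> # w)) \<or>
      (tgt Q \<alpha> = i \<and> bound_path Q (src Q \<alpha>, w @ [\<alpha>]))"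
    using not_maximal_extends[OF bW[folded w_def] nm] by auto
  have A: "ptgt Qh (Lay i r, L) = Lay j (r + n_gam L)"
    using beta_free_path[OF PP nb0] unfolding w_def j_def by auto
  have fl: "r + n_gam L \<le> Suc m" using ptgt_in_verts[OF bound_quiver_Qh PP] A by simp
  have iv: "i \<in> verts Q" "r \<le> Suc m" using path_start_verts[OF PP] by auto
  have sv: "src Q \<alpha> \<in> verts Q" using bound_quiver_Q \<alpha> unfolding bound_quiver_def by blast
  from alt show ?thesis
  proof
    assume h: "src Q \<alpha> = ptgt Q (i, w) \<and> bound_path Q (i, \<alpha> # w)"
    obtain \<theta> where \<theta>: "\<forall>a\<in>ideal_of Q. pairing \<theta> a = 0" "\<theta> (i, \<alpha> # w) \<noteq> 0"
      using ex_functional_annihilating[OF fin nicely_graded_Q] h by blast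
    let ?a = "ACopy \<alpha> (r + n_gam L)"
    have P': "is_path Qh (Lay i r, ?a # L)"
      using PP \<alpha> fl A h unfolding j_def by (simp add: is_path_Cons)
    have "gam_functional (n_gam L) r \<theta> (Lay i r, ?a # L) \<noteq> 0"
      using \<theta> nb0 unfolding gam_functional_def w_def by simp
    then have "bound_path Qh (Lay i r, ?a # L)"
      using bound_pathI_functional[OF P'] pairing_gam_functional_ideal[OF \<theta>(1) g] by blast
    then show ?thesis using \<alpha> fl A h unfolding j_def by (intro not_maximal_bound_pathI[of ?a]) auto
  next
    assume h: "tgt Q \<alpha> = i \<and> bound_path Q (src Q \<alpha>, w @ [\<alpha>])"
    obtain \<theta> where \<theta>: "\<forall>a\<in>ideal_of Q. pairing \<theta> a = 0" "\<theta> (src Q \<alpha>, w @ [\<alpha>]) \<noteq> 0"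
      using ex_functional_annihilating[OF fin nicely_graded_Q] h by blast
    let ?a = "ACopy \<alpha> r"
    have P': "is_path Qh (Lay (src Q \<alpha>) r, L @ [?a])"
      using PP h \<alpha> sv iv by (intro is_path_append) (simp_all add: is_path_Cons)
    have "gam_functional (n_gam L) r \<theta> (Lay (src Q \<alpha>) r, L @ [?a]) \<noteq> 0"
      using \<theta> nb0 unfolding gam_functional_def w_def by simp
    then have "bound_path Qh (Lay (src Q \<alpha>) r, L @ [?a])"
      using bound_pathI_functional[OF P'] pairing_gam_functional_ideal[OF \<theta>(1) g] by blast
    then show ?thesis using \<alpha> iv h by (intro not_maximal_bound_pathI[of ?a]) auto
  qed
qed

lemma not_maximal_lift_gam:
  assumes bW: "bound_path Q (i, w)" and r: "r \<le> m"
  shows "\<not> maximal_bound_path Qh (Lay i r, lift r w)"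
proof -
  have A: "is_path Q (i, w)" using bW unfolding bound_path_def by blast
  have jv: "ptgt Q (i, w) \<in> verts Q" by (rule ptgt_in_verts[OF bound_quiver_Q A])
  obtain \<theta> where \<theta>: "\<forall>a\<in>ideal_of Q. pairing \<theta> a = 0" "\<theta> (i, w) \<noteq> 0"
    using ex_functional_annihilating[OF fin nicely_graded_Q bW] by blast
  let ?a = "Gam (ptgt Q (i, w)) r"
  have P': "is_path Qh (Lay i r, ?a # lift r w)"
    using is_path_pcopy[OF A, of r] jv r by (simp add: is_path_Cons pcopy_lift ptgt_lift)
  have "gam_functional 1 r \<theta> (Lay i r, ?a # lift r w) \<noteq> 0"
    using \<theta> unfolding gam_functional_def by simp
  then have "bound_path Qh (Lay i r, ?a # lift r w)"
    using bound_pathI_functional[OF P', of "gam_functional 1 r \<theta>"] pairing_gam_functional_ideal[OF \<theta>(1)]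
    by simp
  then show ?thesis using jv r by (intro not_maximal_bound_pathI[of ?a]) (auto simp: ptgt_lift)
qed

text \<open>Some basis element \<open>p\<close> has a nonzero coordinate at \<open>w\<close>; it ends where \<open>w\<close> ends, so \<open>\<beta>\<^sub>p\<close>
  can be appended to the copy of \<open>w\<close> on the top floor.\<close>

lemma not_maximal_lift_beta:
  assumes bW: "bound_path Q (i, w)" and wm: "length w = m"
  shows "\<not> maximal_bound_path Qh (Lay i (Suc m), lift (Suc m) w)"
proof -
  have A: "is_path Q (i, w)" using bW unfolding bound_path_def by blast
  obtain p where pM: "p \<in> M" and pnz: "dualf Q m M p (i, w) \<noteq> 0"
    using ex_dualf_nonzero[OF mb bW] wm by (auto simp: plen_def)
  have ends: "fst p = i" "ptgt Q p = ptgt Q (i, w)"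
    using dualf_ends[OF mb bound_quiver_Q pnz] by auto
  have tv: "ptgt Q p \<in> verts Q" using ptgt_in_verts[OF bound_quiver_Q] M_path[OF pM] by blast
  have pM': "(i, snd p) \<in> M" and tp: "ptgt Q (i, snd p) = ptgt Q (i, w)"
    using pM ends by (metis prod.collapse)+
  let ?a = "Beta (fst p) (snd p)"
  have P': "is_path Qh (Lay (ptgt Q p) 0, lift (Suc m) w @ [?a])"
    using is_path_pcopy[OF A, of "Suc m"] pM' tp tv ends
    by (intro is_path_append) (simp_all add: is_path_Cons pcopy_lift)
  have "beta_functional Q m M (ptgt Q (i, w), []) (Lay (ptgt Q p) 0, lift (Suc m) w @ [?a])
      = dualf Q m M p (i, w)"
    using beta_functional_lift[of Q m M _ _ "Suc m" w "fst p" "snd p" 0 "[]"] ends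
    by (simp add: dual_act_def pcomp_def) (metis prod.collapse)
  then have "bound_path Qh (Lay (ptgt Q p) 0, lift (Suc m) w @ [?a])"
    using bound_pathI_functional[OF P', of "beta_functional Q m M (ptgt Q (i, w), [])"]
      pairing_beta_functional_ideal ptgt_in_verts[OF bound_quiver_Q A] pnz by simp
  then show ?thesis using pM ends by (intro not_maximal_bound_pathI[of ?a]) auto
qed

text \<open>The first arrow \<alpha> of the witness \<open>z\<close>, which is nontrivial because the path is short, extends
  the path by \<open>\<alpha>\<^sup>[\<^sup>m\<^sup>+\<^sup>1\<^sup>]\<close> on the left.\<close>

lemma not_maximal_beta_path:
  assumes b: "bound_path Qh (Lay i r, L)" and nb: "n_beta L \<noteq> 0" and short: "length L \<le> m"
  shows "\<not> maximal_bound_path Qh (Lay i r, L)"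
proof -
  obtain X s as Y z where B: "L = lift (Suc m) X @ Beta s as # lift 0 Y" "r = 0"
      "ptgt Qh (Lay i r, L) = Lay (ptgt Q (s, X)) (Suc m)"
    and z: "is_path Q z" "ptgt Q (s, X) = fst z" "ptgt Q z = i"
    and D: "dualf Q m M (s, as) (pcomp (i, Y) (pcomp z (s, X))) \<noteq> 0"
    and lz: "length Y + length (snd z) + length X = m"
    by (rule bound_beta_path_witness[OF b nb])
  have "snd z \<noteq> []" using lz short B(1) by auto
  then obtain zl \<alpha> where zs: "snd z = zl @ [\<alpha>]" by (metis rev_exhaust)
  have zp: "is_path Q (fst z, zl @ [\<alpha>])" using z(1) zs by (metis prod.collapse)
  have \<alpha>: "\<alpha> \<in> arrs Q" "src Q \<alpha> = fst z" using is_path_appendD1[OF zp] by (auto simp: is_path_Cons)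
  have pz': "is_path Q (tgt Q \<alpha>, zl)" using is_path_appendD2[OF bound_quiver_Q zp] by simp
  have tz': "ptgt Q (tgt Q \<alpha>, zl) = i" using z(3) zs ptgt_append[of Q "fst z" zl "[\<alpha>]"]
    by (metis prod.collapse ptgt_Cons ptgt_Nil)
  let ?a = "ACopy \<alpha> (Suc m)"
  have P': "is_path Qh (Lay i r, ?a # L)"
    using b \<alpha> B(3) z(2) unfolding bound_path_def by (simp add: is_path_Cons)
  have l: "?a # L = lift (Suc m) (\<alpha> # X) @ Beta s as # lift 0 Y" using B(1) by simp
  have "beta_functional Q m M (tgt Q \<alpha>, zl) (Lay i r, ?a # L)
      = dualf Q m M (s, as) (pcomp (i, Y) (pcomp z (s, X)))"
    unfolding l beta_functional_lift using tz' zs by (simp add: dual_act_def pcomp_def)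
  then have "bound_path Qh (Lay i r, ?a # L)"
    using bound_pathI_functional[OF P', of "beta_functional Q m M (tgt Q \<alpha>, zl)"]
      pairing_beta_functional_ideal[OF pz'] D by simp
  then show ?thesis using \<alpha> B(3) z(2) by (intro not_maximal_bound_pathI[of ?a]) auto
qed

lemma short_bound_path_not_maximal:
  assumes b: "bound_path Qh P" and le: "plen P \<le> m"
  shows "\<not> maximal_bound_path Qh P"
proof -
  obtain i r L where Pe: "P = (Lay i r, L)" and PP: "is_path Qh (Lay i r, L)"
    using b path_Qh_cases unfolding bound_path_def by blast
  have b': "bound_path Qh (Lay i r, L)" using b Pe by simp
  have short: "length L \<le> m" using le Pe unfolding plen_def by simp
  have "\<not> maximal_bound_path Qh (Lay i r, L)"
  proof (cases "n_beta L = 0")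
    case False
    then show ?thesis by (rule not_maximal_beta_path[OF b' _ short])
  next
    case nb0: True
    have g: "n_gam L \<le> 1" by (rule bound_path_n_gam_le_1[OF b' nb0])
    have bW: "bound_path Q (i, strip L)" by (rule bound_path_strip[OF b' nb0])
    have len: "length L = length (strip L) + n_gam L"
      using length_strip_counts[of L] PP nb0 by (simp add: is_path_def)
    show ?thesis
    proof (cases "length (strip L) < m")
      case True
      then show ?thesis using not_maximal_extend_arrow[OF PP nb0 g bW] by (simp add: plen_def)
    next
      case False
      then have full: "length (strip L) = m" "n_gam L = 0" using len short by auto
      then have Lc: "L = lift r (strip L)" using beta_free_path[OF PP nb0] by auto
      have "r \<le> Suc m" using path_start_verts[OF PP] by blast
      then consider "r \<le> m" | "r = Suc m" by linarith
      then show ?thesis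
      proof cases
        case 1
        then show ?thesis using not_maximal_lift_gam[OF bW] Lc by metis
      next
        case 2
        then show ?thesis using not_maximal_lift_beta[OF bW full(1)] Lc by metis
      qed
    qed
  qed
  then show ?thesis unfolding Pe .
qed

lemma m_nicely_graded_Qh: "m_nicely_graded (Suc m) Qh"
proof -
  have "plen P = Suc m" if "maximal_bound_path Qh P" for P
  proof -
    have b: "bound_path Qh P" using that unfolding maximal_bound_path_def by blast
    have "plen P \<le> Suc m" by (rule bound_path_length_le_Suc[OF b])
    moreover have "\<not> plen P \<le> m" using short_bound_path_not_maximal[OF b] that by blast
    ultimately show ?thesis by simp
  qed
  then show ?thesis unfolding m_nicely_graded_def properly_graded_def using nicely_graded_Qh by blast
qed

end

lemma multilayer_finite_graded:
  fixes Q :: "('v, 'a, 'k::field) uquiver"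
  assumes "finite_bq Q" "m_nicely_graded m Q" "is_mbasis Q m M"
  shows "finite_bq (multilayer Q m M) \<and> m_nicely_graded (Suc m) (multilayer Q m M)"
proof -
  interpret multilayer_context Q m M using assms by unfold_locales
  show ?thesis using finite_bq_Qh m_nicely_graded_Qh by blast
qed

definition some_mbasis :: "('v,'a,'k::field) uquiver \<Rightarrow> nat \<Rightarrow> ('v vert \<times> ('v,'a) arr list) set" where
  "some_mbasis Q m = (SOME M. is_mbasis Q m M)"

lemma is_mbasis_some_mbasis:
  "finite_bq Q \<Longrightarrow> m_nicely_graded m Q \<Longrightarrow> is_mbasis Q m (some_mbasis Q m)"
  unfolding some_mbasis_def by (rule someI_ex) (rule ex_mbasis)

primrec ml_tower :: "('v,'a,'k::field) uquiver \<Rightarrow> nat \<Rightarrow> nat \<Rightarrow> ('v,'a,'k) uquiver" where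
  "ml_tower Q n 0 = Q"
| "ml_tower Q n (Suc t) = multilayer (ml_tower Q n t) (n + t) (some_mbasis (ml_tower Q n t) (n + t))"

lemma ml_tower_finite_graded:
  assumes "finite_bq Q" "m_nicely_graded n Q"
  shows "finite_bq (ml_tower Q n t) \<and> m_nicely_graded (n + t) (ml_tower Q n t)"
proof (induction t)
  case 0
  then show ?case using assms by simp
next
  case (Suc t)
  then have fg: "finite_bq (ml_tower Q n t)" "m_nicely_graded (n + t) (ml_tower Q n t)" by blast+
  show ?case using multilayer_finite_graded[OF fg is_mbasis_some_mbasis[OF fg]] by simp
qed

theorem theorem5p6:
  fixes Q :: "('v, 'a, 'k::field) uquiver" and n :: nat
  assumes "finite_bq Q" and "m_nicely_graded n Q"
  shows "\<exists>Qs :: nat \<Rightarrow> ('v, 'a, 'k) uquiver. Qs 0 = Q \<and>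
           (\<forall>t. nicely_graded (Qs t) \<and> is_multilayer_of (Qs t) (Qs (Suc t))
                \<and> m_nicely_graded (n + t) (Qs t))"
proof (intro exI[of _ "ml_tower Q n"] conjI allI)
  fix t
  have fg: "finite_bq (ml_tower Q n t)" "m_nicely_graded (n + t) (ml_tower Q n t)"
    using ml_tower_finite_graded[OF assms] by blast+
  then show "m_nicely_graded (n + t) (ml_tower Q n t)" "nicely_graded (ml_tower Q n t)"
    unfolding m_nicely_graded_def by blast+
  show "is_multilayer_of (ml_tower Q n t) (ml_tower Q n (Suc t))"
    unfolding is_multilayer_of_def using fg is_mbasis_some_mbasis[OF fg] by auto
qed simp

end
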